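(* Let $n\ge1$, $N=\{1,\dots,n\}$, $0\le t_0<t_1$, $x_0\in\mathbb R^m$, and for each $k\in N$ let $U_k\subset C([t_0,t_1];\mathbb{R}^{m_k})$ be a set of admissible controls as described in the context, which is in addition convex. Let $f\in Y$, and for each $i\in N$ let $\boldsymbol J_i=(J^i_1,\dots,J^i_{d_i})$ be the payoff $\boldsymbol{J}_i(u_1,\dots,u_n)=\boldsymbol{\psi}_i(x(t_1))+\int_{t_0}^{t_1}\boldsymbol{L}_i(t,x(t),u_1(t),\dots,u_n(t))\,\mathrm{d}t$, where $x$ is the state generated by $(u_1,\dots,u_n)$. For each $i\in N$ let $\omega_i=(\omega^i_1,\dots,\omega^i_{d_i})\in\mathrm{int}\,\mathbb R^{d_i}_+$ (all components positive). Suppose that for each $i\in N$: (i) $\sum_{k=1}^{d_i}\omega^i_k\cdot J^i_k:U_1\times\dots\times U_n\to\mathcal I(\mathbb R)$ is continuous, and (ii) for every $u_{-i}\in U_{-i}$, the map $u_i\mapsto\sum_{k=1}^{d_i}\omega^i_k\cdot J^i_k(u_i,u_{-i})$ is generalized $\mathcal I(\mathbb R_+)$-quasi-concave on $U_i$. Then the game has at least one weighted open-loop Pareto-Nash equilibrium, i.e. there exists $(u_1^*,\dots,u_n^* )\in U_1\times\dots\times U_n$ such that for every $i\in N$ and every $u_i\in U_i$, $$\sum_{k=1}^{d_i}\omega^i_k J^i_k(u_i^*,u_{-i}^* )\nprec\sum_{k=1}^{d_i}\omega^i_k J^i_k(u_i,u_{-i}^* ).$$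
   Context: Interval arithmetic: $\mathcal{I}(\mathbb{R})$ is the set of compact intervals, $\mathcal I(\mathbb R)^d$ the $d$-tuples of them; $[a,b]+[c,d]=[a+c,b+d]$ and $\lambda[a,b]=[\min(\lambda a,\lambda b),\max(\lambda a,\lambda b)]$. The gH-difference is $[\underline a,\overline a]\ominus_{gH}[\underline b,\overline b]=[\min\{\underline a-\underline b,\overline a-\overline b\},\max\{\underline a-\underline b,\overline a-\overline b\}]$ (componentwise for vectors). $\mathcal I(\mathbb R_+)$ is the set of compact intervals contained in $[0,\infty)$ and $\mathrm{int}\,\mathcal I(\mathbb R_+)$ its interior (compact intervals contained in $(0,\infty)$). For intervals $A,B$, $B\prec A$ means $A\ominus_{gH}B\in\mathrm{int}\,\mathcal I(\mathbb R_+)$, and $B\nprec A$ its negation. An interval-valued function $F$ on a Hausdorff space is continuous if for each $x$ and $\epsilon>0$ there is an open neighbourhood $o(x)$ with $F(x')\ominus_{gH}F(x)\subset(-\epsilon,\epsilon)$ for $x'\in o(x)$. On a nonempty convex set $\mathcal K$, $F:\mathcal K\to\mathcal I(\mathbb R)$ is generalized $\mathcal I(\mathbb R_+)$-quasi-concave if for all $x_1,x_2\in\mathcal K$, $A\in\mathcal I(\mathbb R)$, $\lambda\in[0,1]$: $A\ominus_{gH}F(x_j)\notin\mathrm{int}\,\mathcal I(\mathbb R_+)$ for $j=1,2$ implies $A\ominus_{gH}F(\lambda x_1+(1-\lambda)x_2)\notin\mathrm{int}\,\mathcal I(\mathbb R_+)$. Setting: $C([t_0,t_1];\mathbb R^{m_k})$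 has the sup norm $\|u\|=\max_t\|u(t)\|$, and $U_1\times\dots\times U_n$ the product topology. Each $U_k$ is nonempty and closed, uniformly bounded by some $M_k>0$ ($\|u_k\|\le M_k$), and equicontinuous. $D=\{(t,x,u_1,\dots,u_n):t\in[t_0,t_1],x\in\mathbb R^m,\|u_k\|\le M_k\}$ and $Y$ is the set of continuous $f:D\to\mathbb R^m$ that are bounded on $D$ and Lipschitz in $x$ uniformly (constant $L>0$). For $f\in Y$, $u_k\in U_k$, the state $x$ is the unique solution of $\dot x=f(t,x,u_1(t),\dots,u_n(t))$, $x(t_0)=x_0$. $\boldsymbol\psi_i:\mathbb R^m\to\mathcal I(\mathbb R)^{d_i}$, $\boldsymbol L_i:[t_0,t_1]\times\mathbb R^m\times\mathbb R^{m_1}\times\dots\times\mathbb R^{m_n}\to\mathcal I(\mathbb R)^{d_i}$; the integral of an interval-valued function is the Aumann integral, equal to $[\int\underline f,\int\overline f]$ for bounded integrable functions. *)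

theory Defs
  imports "HOL-Analysis.Analysis"
begin

section \<open>Compact intervals, represented as pairs (lower, upper)\<close>

type_synonym ival = "real \<times> real"

definition valid_ival :: "ival \<Rightarrow> bool" where
  "valid_ival A \<longleftrightarrow> fst A \<le> snd A"

definition iadd :: "ival \<Rightarrow> ival \<Rightarrow> ival" where
  "iadd A B = (fst A + fst B, snd A + snd B)"

definition iscale :: "real \<Rightarrow> ival \<Rightarrow> ival" where
  "iscale l A = (min (l * fst A) (l * snd A), max (l * fst A) (l * snd A))"

definition gH_diff :: "ival \<Rightarrow> ival \<Rightarrow> ival" where
  "gH_diff A B = (min (fst A - fst B) (snd A - snd B), max (fst A - fst B) (snd A - snd B))"

text \<open>Membership in int I(R_+): compact interval contained in (0,infinity).\<close>
definition int_pos :: "ival \<Rightarrow> bool" where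
  "int_pos A \<longleftrightarrow> valid_ival A \<and> 0 < fst A"

definition iprec :: "ival \<Rightarrow> ival \<Rightarrow> bool" where
  "iprec B A \<longleftrightarrow> int_pos (gH_diff A B)"

definition wsum :: "(nat \<Rightarrow> real) \<Rightarrow> nat \<Rightarrow> (nat \<Rightarrow> ival) \<Rightarrow> ival" where
  "wsum w d J = foldr (\<lambda>k acc. iadd (iscale (w k) (J k)) acc) [1..<Suc d] (0, 0)"

section \<open>Vectors of R^d as nat => real (coordinates 0..d-1), controls\<close>

definition vnorm :: "nat \<Rightarrow> (nat \<Rightarrow> real) \<Rightarrow> real" where
  "vnorm d v = sqrt (\<Sum>j<d. (v j)\<^sup>2)"

text \<open>C([t0,t1]; R^d): continuous functions, zero-padded outside [t0,t1] and
  in coordinates j >= d (unique representatives).\<close>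
definition Cspace :: "real \<Rightarrow> real \<Rightarrow> nat \<Rightarrow> (real \<Rightarrow> nat \<Rightarrow> real) set" where
  "Cspace t0 t1 d = {u. continuous_on {t0..t1} u \<and> (\<forall>t j. d \<le> j \<longrightarrow> u t j = 0)
                        \<and> (\<forall>t. t \<notin> {t0..t1} \<longrightarrow> u t = (\<lambda>j. 0))}"

definition supdist :: "real \<Rightarrow> real \<Rightarrow> nat \<Rightarrow> (real \<Rightarrow> nat \<Rightarrow> real) \<Rightarrow> (real \<Rightarrow> nat \<Rightarrow> real) \<Rightarrow> real" where
  "supdist t0 t1 d u v = (SUP t\<in>{t0..t1}. vnorm d (\<lambda>j. u t j - v t j))"

definition admissible :: "real \<Rightarrow> real \<Rightarrow> nat \<Rightarrow> real \<Rightarrow> (real \<Rightarrow> nat \<Rightarrow> real) set \<Rightarrow> bool" where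
  "admissible t0 t1 d Mk U \<longleftrightarrow>
     U \<noteq> {} \<and> U \<subseteq> Cspace t0 t1 d
     \<comment> \<open>closed in C([t0,t1];R^d) w.r.t. the sup norm\<close>
     \<and> (\<forall>u\<in>Cspace t0 t1 d. (\<forall>e>0. \<exists>v\<in>U. supdist t0 t1 d u v < e) \<longrightarrow> u \<in> U)
     \<comment> \<open>uniformly bounded by Mk > 0\<close>
     \<and> 0 < Mk \<and> (\<forall>u\<in>U. \<forall>t\<in>{t0..t1}. vnorm d (u t) \<le> Mk)
     \<comment> \<open>equicontinuous\<close>
     \<and> (\<forall>t\<in>{t0..t1}. \<forall>e>0. \<exists>\<delta>>0. \<forall>s\<in>{t0..t1}. \<forall>u\<in>U.
           \<bar>s - t\<bar> < \<delta> \<longrightarrow> vnorm d (\<lambda>j. u s j - u t j) < e)"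

definition cmb :: "real \<Rightarrow> (real \<Rightarrow> nat \<Rightarrow> real) \<Rightarrow> (real \<Rightarrow> nat \<Rightarrow> real) \<Rightarrow> (real \<Rightarrow> nat \<Rightarrow> real)" where
  "cmb l u v = (\<lambda>t j. l * u t j + (1 - l) * v t j)"

definition convex_ctrl :: "(real \<Rightarrow> nat \<Rightarrow> real) set \<Rightarrow> bool" where
  "convex_ctrl U \<longleftrightarrow> (\<forall>u\<in>U. \<forall>v\<in>U. \<forall>l\<in>{0..1}. cmb l u v \<in> U)"

definition Prof :: "nat \<Rightarrow> (nat \<Rightarrow> (real \<Rightarrow> nat \<Rightarrow> real) set) \<Rightarrow> (nat \<Rightarrow> real \<Rightarrow> nat \<Rightarrow> real) set" where
  "Prof n U = {us. (\<forall>k\<in>{1..n}. us k \<in> U k) \<and> (\<forall>k. k \<notin> {1..n} \<longrightarrow> us k = (\<lambda>t j. 0))}"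

text \<open>Continuity of an interval-valued function on U_1 x ... x U_n with the product
  of the sup-norm topologies (finite product: basic neighbourhoods are products of balls).\<close>
definition icont_prof :: "nat \<Rightarrow> real \<Rightarrow> real \<Rightarrow> (nat \<Rightarrow> nat) \<Rightarrow> (nat \<Rightarrow> (real \<Rightarrow> nat \<Rightarrow> real) set)
     \<Rightarrow> ((nat \<Rightarrow> real \<Rightarrow> nat \<Rightarrow> real) \<Rightarrow> ival) \<Rightarrow> bool" where
  "icont_prof n t0 t1 m U F \<longleftrightarrow>
     (\<forall>p\<in>Prof n U. \<forall>e>0. \<exists>\<delta>>0. \<forall>q\<in>Prof n U.
        (\<forall>k\<in>{1..n}. supdist t0 t1 (m k) (q k) (p k) < \<delta>) \<longrightarrow>
        (let D = gH_diff (F q) (F p) in -e < fst D \<and> snd D < e))"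

definition gqc :: "(real \<Rightarrow> nat \<Rightarrow> real) set \<Rightarrow> ((real \<Rightarrow> nat \<Rightarrow> real) \<Rightarrow> ival) \<Rightarrow> bool" where
  "gqc K F \<longleftrightarrow> (\<forall>x1\<in>K. \<forall>x2\<in>K. \<forall>A. \<forall>l\<in>{0..1}. valid_ival A \<longrightarrow>
      \<not> int_pos (gH_diff A (F x1)) \<longrightarrow> \<not> int_pos (gH_diff A (F x2)) \<longrightarrow>
      \<not> int_pos (gH_diff A (F (cmb l x1 x2))))"

text \<open>Control values (u_1(t),...,u_n(t)) are packed as w :: nat => nat => real,
  w k the value of player k, zero outside k in {1..n} and coordinates >= m k.\<close>
definition Ddom :: "nat \<Rightarrow> real \<Rightarrow> real \<Rightarrow> (nat \<Rightarrow> nat) \<Rightarrow> (nat \<Rightarrow> real)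
     \<Rightarrow> (real \<times> 'x::euclidean_space \<times> (nat \<Rightarrow> nat \<Rightarrow> real)) set" where
  "Ddom n t0 t1 m M = {(t, x, w). t \<in> {t0..t1} \<and> (\<forall>k\<in>{1..n}. vnorm (m k) (w k) \<le> M k)
       \<and> (\<forall>k j. k \<notin> {1..n} \<or> m k \<le> j \<longrightarrow> w k j = 0)}"

definition Yclass :: "nat \<Rightarrow> real \<Rightarrow> real \<Rightarrow> (nat \<Rightarrow> nat) \<Rightarrow> (nat \<Rightarrow> real)
     \<Rightarrow> (real \<Rightarrow> 'x::euclidean_space \<Rightarrow> (nat \<Rightarrow> nat \<Rightarrow> real) \<Rightarrow> 'x) set" where
  "Yclass n t0 t1 m M = {f.
      continuous_on (Ddom n t0 t1 m M) (\<lambda>(t, x, w). f t x w)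
    \<and> (\<exists>B. \<forall>(t, x, w)\<in>Ddom n t0 t1 m M. norm (f t x w) \<le> B)
    \<and> (\<exists>L>0. \<forall>(t, x, w)\<in>Ddom n t0 t1 m M. \<forall>y.
           norm (f t x w - f t y w) \<le> L * norm (x - y))}"

definition state :: "(real \<Rightarrow> 'x::euclidean_space \<Rightarrow> (nat \<Rightarrow> nat \<Rightarrow> real) \<Rightarrow> 'x) \<Rightarrow> real \<Rightarrow> real \<Rightarrow> 'x
     \<Rightarrow> (nat \<Rightarrow> real \<Rightarrow> nat \<Rightarrow> real) \<Rightarrow> real \<Rightarrow> 'x" where
  "state f t0 t1 x0 us = (THE x. x t0 = x0
      \<and> (\<forall>t\<in>{t0..t1}. (x has_vector_derivative f t (x t) (\<lambda>k. us k t)) (at t within {t0..t1}))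
      \<and> (\<forall>t. t \<notin> {t0..t1} \<longrightarrow> x t = 0))"

text \<open>Component k of the interval-vector payoff of player i; the Aumann integral of a
  bounded integrable interval function is [int lower, int upper].\<close>
definition payoff :: "(nat \<Rightarrow> 'x::euclidean_space \<Rightarrow> nat \<Rightarrow> ival)
     \<Rightarrow> (nat \<Rightarrow> real \<Rightarrow> 'x \<Rightarrow> (nat \<Rightarrow> nat \<Rightarrow> real) \<Rightarrow> nat \<Rightarrow> ival)
     \<Rightarrow> (real \<Rightarrow> 'x \<Rightarrow> (nat \<Rightarrow> nat \<Rightarrow> real) \<Rightarrow> 'x) \<Rightarrow> real \<Rightarrow> real \<Rightarrow> 'x
     \<Rightarrow> nat \<Rightarrow> (nat \<Rightarrow> real \<Rightarrow> nat \<Rightarrow> real) \<Rightarrow> nat \<Rightarrow> ival" where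
  "payoff \<psi> L f t0 t1 x0 i us k =
     (let x = state f t0 t1 x0 us in
      iadd (\<psi> i (x t1) k)
           (integral {t0..t1} (\<lambda>t. fst (L i t (x t) (\<lambda>j. us j t) k)),
            integral {t0..t1} (\<lambda>t. snd (L i t (x t) (\<lambda>j. us j t) k))))"

end

theory Submission
  imports Defs "HOL-Complex_Analysis.Great_Picard"
begin

(* Only lower endpoints matter.  If B \<prec> A then the lower endpoint of A exceeds that of B, an
   interval-valued function that is continuous has a continuous lower endpoint, and generalized
   I(R_+)-quasi-concavity makes the strict upper level sets of the lower endpoint convex.  So it
   suffices to prove Nash's theorem for continuous real payoffs with convex strict upper level sets
   on the product of the control sets, which is compact by Arzela-Ascoli.

   Suppose no equilibrium exists.  Then every profile admits a strictly improving unilateral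
   deviation, which stays improving nearby, so by compactness finitely many deviations cover all
   profiles.  Their positive parts of the gains, normalised by the largest total gain of a player,
   define a continuous map from profiles to a cube of weights; conversely weights define profiles
   by convex combination of the deviations.  A Brouwer fixed point of the composite gives a profile
   in which the player of maximal gain plays a convex combination of strictly improving deviations,
   which is itself strictly improving by quasi-concavity: a contradiction. *)

section \<open>Sequentially compact pseudometric spaces\<close>

(* Controls and profiles live in function types without metric structure, so compactness and
   continuity are developed for pseudometrics on carrier sets, with pnhds as neighbourhood filter. *)
definition pnhds :: "'a set \<Rightarrow> ('a \<Rightarrow> 'a \<Rightarrow> real) \<Rightarrow> 'a \<Rightarrow> 'a filter" where
  "pnhds S \<rho> p = (INF e\<in>{0<..}. principal {q\<in>S. \<rho> p q < e})"

lemma eventually_pnhds: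
  "eventually P (pnhds S \<rho> p) \<longleftrightarrow> (\<exists>e>0. \<forall>q\<in>S. \<rho> p q < e \<longrightarrow> P q)"
proof -
  have "eventually P (pnhds S \<rho> p) \<longleftrightarrow> (\<exists>e\<in>{0<..}. eventually P (principal {q\<in>S. \<rho> p q < e}))"
    unfolding pnhds_def
  proof (rule eventually_INF_base)
    fix a b :: real assume "a \<in> {0<..}" "b \<in> {0<..}"
    then show "\<exists>e\<in>{0<..}. principal {q\<in>S. \<rho> p q < e}
        \<le> inf (principal {q\<in>S. \<rho> p q < a}) (principal {q\<in>S. \<rho> p q < b})"
      by (intro bexI[of _ "min a b"]) (auto simp: inf_principal)
  qed auto
  then show ?thesis
    by (auto simp: eventually_principal)
qed

lemma filterlim_pnhds:
  "filterlim g (pnhds T \<sigma> c) F \<longleftrightarrow> (\<forall>e>0. eventually (\<lambda>x. g x \<in> T \<and> \<sigma> c (g x) < e) F)"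
  unfolding pnhds_def filterlim_INF filterlim_principal by auto

lemma filterlim_pnhdsI:
  assumes "eventually (\<lambda>x. g x \<in> T) F" and "((\<lambda>x. \<sigma> c (g x)) \<longlongrightarrow> 0) F"
  shows "filterlim g (pnhds T \<sigma> c) F"
  unfolding filterlim_pnhds using assms by (auto dest: order_tendstoD(2) intro: eventually_conj)

lemma filterlim_pnhdsD:
  assumes "filterlim g (pnhds T \<sigma> c) F" and "e > 0"
  shows "eventually (\<lambda>x. \<sigma> c (g x) < e) F"
proof -
  have "eventually (\<lambda>x. g x \<in> T \<and> \<sigma> c (g x) < e) F"
    using assms unfolding filterlim_pnhds by blast
  then show ?thesis
    by (rule eventually_mono) simp
qed

lemma tendsto_pnhds:
  "(f \<longlongrightarrow> l) (pnhds S \<rho> p) \<longleftrightarrow> (\<forall>e>0. \<exists>\<delta>>0. \<forall>q\<in>S. \<rho> p q < \<delta> \<longrightarrow> dist (f q) l < e)"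
  unfolding tendsto_iff eventually_pnhds ..

lemma LIMSEQ_inverse_Suc_subseq: "strict_mono r \<Longrightarrow> (\<lambda>j. inverse (real (Suc (r j)))) \<longlonglongrightarrow> 0"
  using LIMSEQ_subseq_LIMSEQ[OF LIMSEQ_inverse_real_of_nat] by (simp add: o_def)

locale pmetric =
  fixes S :: "'a set" and \<rho> :: "'a \<Rightarrow> 'a \<Rightarrow> real"
  assumes refl: "x \<in> S \<Longrightarrow> \<rho> x x = 0"
    and sym: "x \<in> S \<Longrightarrow> y \<in> S \<Longrightarrow> \<rho> x y = \<rho> y x"
    and triangle: "x \<in> S \<Longrightarrow> y \<in> S \<Longrightarrow> z \<in> S \<Longrightarrow> \<rho> x z \<le> \<rho> x y + \<rho> y z"
begin

lemma nonneg: "x \<in> S \<Longrightarrow> y \<in> S \<Longrightarrow> 0 \<le> \<rho> x y"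
  using triangle[of x y x] refl[of x] sym[of x y] by simp

lemma filterlim_pnhds_tendsto:
  assumes "c \<in> S" and "filterlim g (pnhds S \<rho> c) F"
  shows "((\<lambda>x. \<rho> c (g x)) \<longlongrightarrow> 0) F"
proof (rule order_tendstoI)
  fix e :: real assume "e < 0"
  have "eventually (\<lambda>x. g x \<in> S) F"
    using assms(2) unfolding filterlim_pnhds by (auto elim!: allE[of _ 1] eventually_mono)
  then show "eventually (\<lambda>x. e < \<rho> c (g x)) F"
    by (rule eventually_mono) (use nonneg[OF assms(1)] \<open>e < 0\<close> in force)
qed (rule filterlim_pnhdsD[OF assms(2)])

end

locale seq_compact_pmetric = pmetric +
  assumes convergent_subseq:
    "(\<And>j. X j \<in> S) \<Longrightarrow> \<exists>x\<in>S. \<exists>r::nat \<Rightarrow> nat. strict_mono r \<and> (\<lambda>j. \<rho> x (X (r j))) \<longlonglongrightarrow> 0"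
begin

lemma common_limit_subseq:
  assumes X: "\<And>j. X j \<in> S" and Y: "\<And>j. Y j \<in> S" and close: "(\<lambda>j. \<rho> (X j) (Y j)) \<longlonglongrightarrow> 0"
  obtains x r where "x \<in> S" "strict_mono r"
    "filterlim (\<lambda>j. X (r j)) (pnhds S \<rho> x) sequentially" "filterlim (\<lambda>j. Y (r j)) (pnhds S \<rho> x) sequentially"
proof -
  obtain x r where x: "x \<in> S" and r: "strict_mono r" and lim: "(\<lambda>j. \<rho> x (X (r j))) \<longlonglongrightarrow> 0"
    using convergent_subseq[of X] X by blast
  have upper: "(\<lambda>j. \<rho> x (X (r j)) + \<rho> (X (r j)) (Y (r j))) \<longlonglongrightarrow> 0"
    using tendsto_add[OF lim LIMSEQ_subseq_LIMSEQ[OF close r]] by (simp add: o_def)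
  have "0 \<le> \<rho> x (Y (r j))" "\<rho> x (Y (r j)) \<le> \<rho> x (X (r j)) + \<rho> (X (r j)) (Y (r j))" for j
    using nonneg[OF x Y] triangle[OF x X Y] by auto
  then have "(\<lambda>j. \<rho> x (Y (r j))) \<longlonglongrightarrow> 0"
    by (intro tendsto_sandwich[OF always_eventually always_eventually tendsto_const upper]) simp_all
  with that x r lim show ?thesis
    using X Y by (simp add: filterlim_pnhdsI)
qed

lemma uniformly_continuous:
  assumes T: "pmetric T \<sigma>" and maps: "g ` S \<subseteq> T"
    and cont: "\<And>p. p \<in> S \<Longrightarrow> filterlim g (pnhds T \<sigma> (g p)) (pnhds S \<rho> p)"
    and e: "e > 0"
  shows "\<exists>\<delta>>0. \<forall>x\<in>S. \<forall>y\<in>S. \<rho> x y < \<delta> \<longrightarrow> \<sigma> (g x) (g y) < e"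
proof (rule ccontr)
  assume neg: "\<not> ?thesis"
  have "\<exists>x\<in>S. \<exists>y\<in>S. \<rho> x y < inverse (Suc j) \<and> e \<le> \<sigma> (g x) (g y)" for j :: nat
    using neg not_less[of "\<sigma> _ _" e] positive_imp_inverse_positive[of "real (Suc j)"] by force
  then obtain X Y where X: "\<And>j. X j \<in> S" and Y: "\<And>j. Y j \<in> S"
    and close: "\<And>j. \<rho> (X j) (Y j) < inverse (Suc j)" and far: "\<And>j. e \<le> \<sigma> (g (X j)) (g (Y j))"
    by metis
  have "(\<lambda>j. \<rho> (X j) (Y j)) \<longlonglongrightarrow> 0"
    using nonneg[OF X Y] less_imp_le[OF close]
    by (intro tendsto_sandwich[OF always_eventually always_eventually tendsto_const LIMSEQ_inverse_real_of_nat])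
      simp_all
  then obtain x r where x: "x \<in> S"
    and X_lim: "filterlim (\<lambda>j. X (r j)) (pnhds S \<rho> x) sequentially"
    and Y_lim: "filterlim (\<lambda>j. Y (r j)) (pnhds S \<rho> x) sequentially"
    using common_limit_subseq[where X=X and Y=Y, OF X Y] by blast
  have gX_lim: "filterlim (\<lambda>j. g (X (r j))) (pnhds T \<sigma> (g x)) sequentially"
    by (rule filterlim_compose[OF cont[OF x] X_lim])
  have gY_lim: "filterlim (\<lambda>j. g (Y (r j))) (pnhds T \<sigma> (g x)) sequentially"
    by (rule filterlim_compose[OF cont[OF x] Y_lim])
  have "eventually (\<lambda>j. \<sigma> (g x) (g (X (r j))) < e/2 \<and> \<sigma> (g x) (g (Y (r j))) < e/2) sequentially"
    using e by (intro eventually_conj filterlim_pnhdsD[OF gX_lim] filterlim_pnhdsD[OF gY_lim]) simp_all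
  then obtain j where near: "\<sigma> (g x) (g (X (r j))) < e/2" "\<sigma> (g x) (g (Y (r j))) < e/2"
    unfolding eventually_sequentially by blast
  have gx: "g x \<in> T" and gX: "g (X (r j)) \<in> T" and gY: "g (Y (r j)) \<in> T"
    using maps x X Y by auto
  show False
    using pmetric.triangle[OF T gX gx gY] pmetric.sym[OF T gX gx] near far[of "r j"] by linarith
qed

lemma lebesgue_number:
  assumes cover: "\<And>x. x \<in> S \<Longrightarrow> \<exists>a\<in>A. eventually (\<lambda>y. y \<in> W a) (pnhds S \<rho> x)"
  shows "\<exists>\<delta>>0. \<forall>x\<in>S. \<exists>a\<in>A. \<forall>y\<in>S. \<rho> x y < \<delta> \<longrightarrow> y \<in> W a"
proof (rule ccontr)
  assume neg: "\<not> ?thesis"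
  have "\<forall>\<delta>>0. \<exists>x\<in>S. \<forall>a\<in>A. \<exists>y\<in>S. \<rho> x y < \<delta> \<and> y \<notin> W a"
    using neg by blast
  then have "\<exists>x\<in>S. \<forall>a\<in>A. \<exists>y\<in>S. \<rho> x y < inverse (Suc j) \<and> y \<notin> W a" for j :: nat
    by simp
  then obtain X where X: "\<And>j. X j \<in> S"
    and escape: "\<And>j a. a \<in> A \<Longrightarrow> \<exists>y\<in>S. \<rho> (X j) y < inverse (Suc j) \<and> y \<notin> W a"
    by metis
  obtain x r where x: "x \<in> S" and r: "strict_mono r" and lim: "(\<lambda>j. \<rho> x (X (r j))) \<longlonglongrightarrow> 0"
    using convergent_subseq[of X] X by blast
  obtain a e where a: "a \<in> A" and e: "e > 0" and ball: "\<forall>y\<in>S. \<rho> x y < e \<longrightarrow> y \<in> W a"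
    using cover[OF x] unfolding eventually_pnhds by blast
  have "eventually (\<lambda>j. inverse (Suc (r j)) < e/2) sequentially"
    by (rule order_tendstoD(2)[OF LIMSEQ_inverse_Suc_subseq[OF r]]) (use e in simp)
  moreover have "eventually (\<lambda>j. \<rho> x (X (r j)) < e/2) sequentially"
    by (rule order_tendstoD(2)[OF lim]) (use e in simp)
  ultimately have "eventually (\<lambda>j. \<rho> x (X (r j)) < e/2 \<and> inverse (Suc (r j)) < e/2) sequentially"
    by (rule eventually_conj[rotated])
  then obtain j where j: "\<rho> x (X (r j)) < e/2" "inverse (Suc (r j)) < e/2"
    unfolding eventually_sequentially by blast
  obtain y where y: "y \<in> S" "\<rho> (X (r j)) y < inverse (Suc (r j))" "y \<notin> W a"
    using escape[OF a] by blast
  have "\<rho> x y < e"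
    using triangle[OF x X[of "r j"] y(1)] j y(2) by linarith
  then show False
    using ball y by blast
qed

lemma totally_bounded:
  assumes "\<delta> > 0"
  shows "\<exists>C\<subseteq>S. finite C \<and> (\<forall>x\<in>S. \<exists>c\<in>C. \<rho> c x < \<delta>)"
proof (rule ccontr)
  assume neg: "\<not> ?thesis"
  define next_pt where "next_pt C = (SOME x. x \<in> S \<and> (\<forall>c\<in>C. \<delta> \<le> \<rho> c x))" for C
  have next_pt: "next_pt C \<in> S \<and> (\<forall>c\<in>C. \<delta> \<le> \<rho> c (next_pt C))" if "finite C" "C \<subseteq> S" for C
  proof -
    have "\<not> (\<forall>x\<in>S. \<exists>c\<in>C. \<rho> c x < \<delta>)"
      using neg that by blast
    then have "\<exists>x. x \<in> S \<and> (\<forall>c\<in>C. \<delta> \<le> \<rho> c x)"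
      by (auto simp: not_less)
    then show ?thesis
      unfolding next_pt_def by (rule someI_ex)
  qed
  define C where "C = rec_nat {} (\<lambda>_ C. insert (next_pt C) C)"
  have C_0: "C 0 = {}" and C_Suc: "C (Suc j) = insert (next_pt (C j)) (C j)" for j
    by (simp_all add: C_def)
  have C: "finite (C j) \<and> C j \<subseteq> S" for j
    by (induction j) (auto simp: C_0 C_Suc next_pt)
  define X where "X j = next_pt (C j)" for j
  have X: "X j \<in> S" for j
    unfolding X_def using next_pt[OF conjunct1[OF C[of j]] conjunct2[OF C[of j]]] by blast
  have X_in_C: "i < j \<Longrightarrow> X i \<in> C j" for i j
    by (induction j) (auto simp: C_Suc X_def less_Suc_eq)
  have separated: "\<delta> \<le> \<rho> (X i) (X j)" if "i < j" for i j
    using next_pt[OF conjunct1[OF C[of j]] conjunct2[OF C[of j]]] X_in_C[OF that]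
    unfolding X_def[of j] by blast
  obtain x r where x: "x \<in> S" and r: "strict_mono r" and lim: "(\<lambda>j. \<rho> x (X (r j))) \<longlonglongrightarrow> 0"
    using convergent_subseq[of X] X by blast
  obtain k where k: "\<forall>j\<ge>k. \<rho> x (X (r j)) < \<delta>/2"
    using order_tendstoD(2)[OF lim, of "\<delta>/2"] assms by (auto simp: eventually_sequentially)
  have "\<delta> \<le> \<rho> (X (r k)) (X (r (Suc k)))"
    using separated r by (simp add: strict_mono_def)
  also have "\<dots> \<le> \<rho> x (X (r k)) + \<rho> x (X (r (Suc k)))"
    using triangle[OF X[of "r k"] x X[of "r (Suc k)"]] sym[OF X[of "r k"] x] by linarith
  also have "\<dots> < \<delta>"
    using k[rule_format, of k] k[rule_format, of "Suc k"] by simp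
  finally show False
    by simp
qed

lemma finite_subcover:
  assumes cover: "\<And>x. x \<in> S \<Longrightarrow> \<exists>a\<in>A. eventually (\<lambda>y. y \<in> W a) (pnhds S \<rho> x)"
  shows "\<exists>F\<subseteq>A. finite F \<and> S \<subseteq> (\<Union>a\<in>F. W a)"
proof -
  obtain \<delta> where "\<delta> > 0" and lebesgue: "\<forall>x\<in>S. \<exists>a\<in>A. \<forall>y\<in>S. \<rho> x y < \<delta> \<longrightarrow> y \<in> W a"
    using lebesgue_number[OF cover] by blast
  obtain C where C: "C \<subseteq> S" "finite C" and net: "\<forall>x\<in>S. \<exists>c\<in>C. \<rho> c x < \<delta>"
    using totally_bounded[OF \<open>\<delta> > 0\<close>] by blast
  have "\<forall>c\<in>C. \<exists>a. a \<in> A \<and> (\<forall>y\<in>S. \<rho> c y < \<delta> \<longrightarrow> y \<in> W a)"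
    using lebesgue C(1) by blast
  then obtain choice where choice: "\<forall>c\<in>C. choice c \<in> A \<and> (\<forall>y\<in>S. \<rho> c y < \<delta> \<longrightarrow> y \<in> W (choice c))"
    by (rule bchoice[elim_format]) blast
  show ?thesis
    using choice net C(2) by (intro exI[of _ "choice ` C"]) blast
qed

end

lemma simultaneous_subseq:
  fixes X :: "nat \<Rightarrow> 'a" and P :: "'i \<Rightarrow> (nat \<Rightarrow> 'a) \<Rightarrow> bool"
  assumes "finite I"
    and exists: "\<And>i Y. i \<in> I \<Longrightarrow> (\<And>j. Y j \<in> A) \<Longrightarrow> \<exists>r::nat \<Rightarrow> nat. strict_mono r \<and> P i (Y \<circ> r)"
    and subseq: "\<And>i Y (r::nat \<Rightarrow> nat). i \<in> I \<Longrightarrow> P i Y \<Longrightarrow> strict_mono r \<Longrightarrow> P i (Y \<circ> r)"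
    and X: "\<And>j. X j \<in> A"
  shows "\<exists>r::nat \<Rightarrow> nat. strict_mono r \<and> (\<forall>i\<in>I. P i (X \<circ> r))"
proof -
  have "\<exists>r::nat \<Rightarrow> nat. strict_mono r \<and> (\<forall>i\<in>J. P i (X \<circ> r))" if "J \<subseteq> I" for J
    using finite_subset[OF that assms(1)] that
  proof (induction J rule: finite_induct)
    case empty
    show ?case
      using strict_mono_id by blast
  next
    case (insert i J)
    then obtain r where r: "strict_mono r" "\<forall>i'\<in>J. P i' (X \<circ> r)"
      by blast
    obtain r' where r': "strict_mono r'" "P i (X \<circ> r \<circ> r')"
      using exists[of i "X \<circ> r"] X insert.prems by auto
    have "\<forall>i'\<in>J. P i' (X \<circ> r \<circ> r')"
      using subseq r(2) r'(1) insert.prems by blast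
    with r' show ?case
      by (intro exI[of _ "r \<circ> r'"] conjI strict_mono_o[OF r(1) r'(1)]) (simp add: comp_def)
  qed
  then show ?thesis
    by blast
qed

definition prod_space :: "'i set \<Rightarrow> ('i \<Rightarrow> 'a set) \<Rightarrow> 'a \<Rightarrow> ('i \<Rightarrow> 'a) set" where
  "prod_space I S z = {p. (\<forall>k\<in>I. p k \<in> S k) \<and> (\<forall>k. k \<notin> I \<longrightarrow> p k = z)}"

definition sum_dist :: "'i set \<Rightarrow> ('i \<Rightarrow> 'a \<Rightarrow> 'a \<Rightarrow> real) \<Rightarrow> ('i \<Rightarrow> 'a) \<Rightarrow> ('i \<Rightarrow> 'a) \<Rightarrow> real" where
  "sum_dist I \<rho> p q = (\<Sum>k\<in>I. \<rho> k (p k) (q k))"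

lemma pmetric_prod_space:
  assumes "\<And>k. k \<in> I \<Longrightarrow> pmetric (S k) (\<rho> k)"
  shows "pmetric (prod_space I S z) (sum_dist I \<rho>)"
proof
  fix p assume p: "p \<in> prod_space I S z"
  have "\<rho> k (p k) (p k) = 0" if "k \<in> I" for k
    using pmetric.refl[OF assms[OF that]] p that by (simp add: prod_space_def)
  then show "sum_dist I \<rho> p p = 0"
    by (simp add: sum_dist_def)
next
  fix p q assume p: "p \<in> prod_space I S z" and q: "q \<in> prod_space I S z"
  have "\<rho> k (p k) (q k) = \<rho> k (q k) (p k)" if "k \<in> I" for k
    using pmetric.sym[OF assms[OF that]] p q that by (simp add: prod_space_def)
  then show "sum_dist I \<rho> p q = sum_dist I \<rho> q p"
    unfolding sum_dist_def by (rule sum.cong[OF refl])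
next
  fix p q r
  assume p: "p \<in> prod_space I S z" and q: "q \<in> prod_space I S z" and r: "r \<in> prod_space I S z"
  have "\<rho> k (p k) (r k) \<le> \<rho> k (p k) (q k) + \<rho> k (q k) (r k)" if "k \<in> I" for k
    using pmetric.triangle[OF assms[OF that]] p q r that by (simp add: prod_space_def)
  then show "sum_dist I \<rho> p r \<le> sum_dist I \<rho> p q + sum_dist I \<rho> q r"
    unfolding sum_dist_def sum.distrib[symmetric] by (rule sum_mono)
qed

lemma seq_compact_pmetric_prod_space:
  assumes I: "finite I" and S: "\<And>k. k \<in> I \<Longrightarrow> seq_compact_pmetric (S k) (\<rho> k)"
  shows "seq_compact_pmetric (prod_space I S z) (sum_dist I \<rho>)"
proof -
  interpret pmetric "prod_space I S z" "sum_dist I \<rho>"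
    using S seq_compact_pmetric.axioms(1) by (blast intro: pmetric_prod_space)
  show ?thesis
  proof
    fix X :: "nat \<Rightarrow> 'a \<Rightarrow> 'b" assume X: "\<And>j. X j \<in> prod_space I S z"
    define P where "P k Y \<longleftrightarrow> (\<exists>u\<in>S k. (\<lambda>j. \<rho> k u (Y j k)) \<longlonglongrightarrow> 0)"
      for k and Y :: "nat \<Rightarrow> 'a \<Rightarrow> 'b"
    have "\<exists>r::nat \<Rightarrow> nat. strict_mono r \<and> (\<forall>k\<in>I. P k (X \<circ> r))"
    proof (rule simultaneous_subseq[OF I _ _ X])
      fix k and Y :: "nat \<Rightarrow> 'a \<Rightarrow> 'b" assume k: "k \<in> I" and Y: "\<And>j. Y j \<in> prod_space I S z"
      then have "Y j k \<in> S k" for j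
        by (simp add: prod_space_def)
      then show "\<exists>r::nat \<Rightarrow> nat. strict_mono r \<and> P k (Y \<circ> r)"
        using seq_compact_pmetric.convergent_subseq[OF S[OF k], of "\<lambda>j. Y j k"] by (auto simp: P_def)
    next
      fix k Y and r :: "nat \<Rightarrow> nat" assume "P k Y" and r: "strict_mono r"
      then obtain u where "u \<in> S k" and "(\<lambda>j. \<rho> k u (Y j k)) \<longlonglongrightarrow> 0"
        by (auto simp: P_def)
      with LIMSEQ_subseq_LIMSEQ[OF this(2) r] show "P k (Y \<circ> r)"
        by (auto simp: P_def o_def)
    qed
    then obtain r :: "nat \<Rightarrow> nat" where r: "strict_mono r"
      and lim: "\<forall>k\<in>I. \<exists>u\<in>S k. (\<lambda>j. \<rho> k u (X (r j) k)) \<longlonglongrightarrow> 0"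
      by (auto simp: P_def)
    then have "\<forall>k\<in>I. \<exists>u. u \<in> S k \<and> (\<lambda>j. \<rho> k u (X (r j) k)) \<longlonglongrightarrow> 0"
      by blast
    then obtain u where u: "\<forall>k\<in>I. u k \<in> S k \<and> (\<lambda>j. \<rho> k (u k) (X (r j) k)) \<longlonglongrightarrow> 0"
      by (rule bchoice[elim_format]) blast
    define x where "x k = (if k \<in> I then u k else z)" for k
    have "x \<in> prod_space I S z"
      using u by (simp add: x_def prod_space_def)
    moreover have "(\<lambda>j. sum_dist I \<rho> x (X (r j))) \<longlonglongrightarrow> 0"
      unfolding sum_dist_def using u by (intro tendsto_null_sum) (simp add: x_def)
    ultimately show "\<exists>x\<in>prod_space I S z. \<exists>r::nat \<Rightarrow> nat. strict_mono r \<and> (\<lambda>j. sum_dist I \<rho> x (X (r j))) \<longlonglongrightarrow> 0"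
      using r by blast
  qed
qed

lemma seq_compact_pmetric_dist:
  fixes S :: "'a::metric_space set"
  assumes "seq_compact S"
  shows "seq_compact_pmetric S dist"
proof unfold_locales
  fix X :: "nat \<Rightarrow> 'a" assume "\<And>j. X j \<in> S"
  then obtain l r where "l \<in> S" "strict_mono r" "(X \<circ> r) \<longlonglongrightarrow> l"
    using seq_compactE[OF assms, of X] by blast
  moreover have "(\<lambda>j. dist l (X (r j))) = (\<lambda>j. dist ((X \<circ> r) j) l)"
    by (simp add: dist_commute)
  ultimately show "\<exists>x\<in>S. \<exists>r::nat \<Rightarrow> nat. strict_mono r \<and> (\<lambda>j. dist x (X (r j))) \<longlonglongrightarrow> 0"
    using tendsto_dist_iff by metis
next
  show "dist x y = dist y x" for x y :: 'a
    by (rule dist_commute)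
  show "dist x z \<le> dist x y + dist y z" for x y z :: 'a
    by (rule dist_triangle)
qed simp

section \<open>Brouwer's fixed point theorem on the unit cube\<close>

(* HOL-Analysis proves Brouwer's theorem for euclidean_space types, but the dimension needed below
   (the size of a finite subcover) is only known inside a proof; so the cube is modelled in
   nat \<Rightarrow> real and the theorem is rederived from Kuhn's lemma. *)
definition unit_cube :: "nat \<Rightarrow> (nat \<Rightarrow> real) set" where
  "unit_cube N = prod_space {..<N} (\<lambda>_. {0..1}) 0"

definition cube_dist :: "nat \<Rightarrow> (nat \<Rightarrow> real) \<Rightarrow> (nat \<Rightarrow> real) \<Rightarrow> real" where
  "cube_dist N = sum_dist {..<N} (\<lambda>_. dist)"

lemma mem_unit_cube: "x \<in> unit_cube N \<longleftrightarrow> (\<forall>i<N. 0 \<le> x i \<and> x i \<le> 1) \<and> (\<forall>i\<ge>N. x i = 0)"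
  by (auto simp: unit_cube_def prod_space_def)

lemma cube_dist_eq: "cube_dist N x y = (\<Sum>i<N. \<bar>x i - y i\<bar>)"
  by (simp add: cube_dist_def sum_dist_def dist_real_def)

lemma cube_dist_le_0_imp_eq:
  assumes "x \<in> unit_cube N" "y \<in> unit_cube N" and "cube_dist N x y \<le> 0"
  shows "x = y"
proof
  fix i
  have "(\<Sum>i<N. \<bar>x i - y i\<bar>) = 0"
    using assms(3) unfolding cube_dist_eq by (simp add: order_antisym sum_nonneg)
  then show "x i = y i"
    using assms(1,2) by (cases "i < N") (simp_all add: sum_nonneg_eq_0_iff mem_unit_cube)
qed

lemma seq_compact_pmetric_unit_cube: "seq_compact_pmetric (unit_cube N) (cube_dist N)"
  unfolding unit_cube_def cube_dist_def
  by (intro seq_compact_pmetric_prod_space seq_compact_pmetric_dist compact_imp_seq_compact) auto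

definition grid_point :: "nat \<Rightarrow> nat \<Rightarrow> (nat \<Rightarrow> nat) \<Rightarrow> nat \<Rightarrow> real" where
  "grid_point p N x = (\<lambda>i. if i < N then x i / p else 0)"

lemma grid_point_unit_cube: "0 < p \<Longrightarrow> \<forall>i<N. x i \<le> p \<Longrightarrow> grid_point p N x \<in> unit_cube N"
  by (auto simp: mem_unit_cube grid_point_def)

lemma grid_cell_le:
  assumes "\<forall>j<N. q j < p" and "\<forall>j<N. q j \<le> x j \<and> x j \<le> q j + 1"
  shows "\<forall>j<N. x j \<le> (p :: nat)"
proof (intro allI impI)
  fix j assume "j < N"
  then have "x j \<le> q j + 1" "q j < p"
    using assms by auto
  then show "x j \<le> p"
    by linarith
qed

lemma abs_grid_point_diff:
  assumes "0 < p" and "\<forall>j<N. q j \<le> x j \<and> x j \<le> q j + 1"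
  shows "\<bar>grid_point p N x i - grid_point p N q i\<bar> \<le> 1 / p"
  using assms by (auto simp: grid_point_def abs_le_iff diff_divide_distrib[symmetric] divide_right_mono)

(* Label a grid point in coordinate i by the side of the diagonal on which F lies there; Kuhn's
   lemma yields a cell carrying both labels in every coordinate. *)
lemma kuhn_sign_change:
  assumes maps: "\<And>x. x \<in> unit_cube N \<Longrightarrow> F x \<in> unit_cube N" and p: "0 < p"
  obtains q where "\<forall>i<N. q i < p"
    and "\<And>i. i < N \<Longrightarrow> \<exists>r s. (\<forall>j<N. q j \<le> r j \<and> r j \<le> q j + 1) \<and> (\<forall>j<N. q j \<le> s j \<and> s j \<le> q j + 1)
      \<and> grid_point p N r i \<le> F (grid_point p N r) i \<and> F (grid_point p N s) i \<le> grid_point p N s i"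
proof -
  let ?pt = "grid_point p N"
  define label where "label x i = (if F (?pt x) i < ?pt x i \<or> x i = p then 1 else 0 :: nat)" for x i
  have label_0: "?pt x i \<le> F (?pt x) i" if "label x i = 0" for x i
    using that by (auto simp: label_def split: if_splits)
  have label_1: "F (?pt x) i \<le> ?pt x i" if "label x i = 1" "\<forall>i<N. x i \<le> p" "i < N" for x i
    using that maps[OF grid_point_unit_cube[OF p that(2)]] p
    by (cases "x i = p") (auto simp: label_def grid_point_def mem_unit_cube split: if_splits)
  obtain q where q: "\<forall>i<N. q i < p" and sperner: "\<forall>i<N. \<exists>r s. (\<forall>j<N. q j \<le> r j \<and> r j \<le> q j + 1)
      \<and> (\<forall>j<N. q j \<le> s j \<and> s j \<le> q j + 1) \<and> label r i \<noteq> label s i"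
  proof (rule kuhn_lemma[OF p, of N label])
    show "\<forall>x. (\<forall>i<N. x i \<le> p) \<longrightarrow> (\<forall>i<N. x i = 0 \<longrightarrow> label x i = 0)"
    proof (intro allI impI)
      fix x i assume x: "\<forall>i<N. x i \<le> p" and i: "i < N" and "x i = 0"
      moreover have "0 \<le> F (?pt x) i"
        using maps[OF grid_point_unit_cube[OF p x]] i by (simp add: mem_unit_cube)
      ultimately show "label x i = 0"
        using p by (simp add: label_def grid_point_def)
    qed
  qed (auto simp: label_def)
  show ?thesis
  proof (rule that[OF q])
    fix i assume i: "i < N"
    then obtain r s where r: "\<forall>j<N. q j \<le> r j \<and> r j \<le> q j + 1" and s: "\<forall>j<N. q j \<le> s j \<and> s j \<le> q j + 1"
      and "label r i \<noteq> label s i"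
      using sperner by blast
    then have "label r i = 0 \<and> label s i = 1 \<or> label r i = 1 \<and> label s i = 0"
      unfolding label_def by (auto split: if_splits)
    then show "\<exists>r s. (\<forall>j<N. q j \<le> r j \<and> r j \<le> q j + 1) \<and> (\<forall>j<N. q j \<le> s j \<and> s j \<le> q j + 1)
      \<and> ?pt r i \<le> F (?pt r) i \<and> F (?pt s) i \<le> ?pt s i"
    proof (elim disjE conjE)
      assume "label r i = 0" "label s i = 1"
      with r s show ?thesis
        using label_0 label_1[OF _ grid_cell_le[OF q s] i] by blast
    next
      assume "label r i = 1" "label s i = 0"
      with r s show ?thesis
        using label_0 label_1[OF _ grid_cell_le[OF q r] i] by blast
    qed
  qed
qed

lemma approx_fixed_point_unit_cube:
  assumes maps: "\<And>x. x \<in> unit_cube N \<Longrightarrow> F x \<in> unit_cube N"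
    and unif: "\<And>e. e > 0 \<Longrightarrow> \<exists>\<delta>>0. \<forall>x\<in>unit_cube N. \<forall>y\<in>unit_cube N.
                 cube_dist N x y < \<delta> \<longrightarrow> cube_dist N (F x) (F y) < e"
    and \<epsilon>: "\<epsilon> > 0"
  shows "\<exists>z\<in>unit_cube N. \<forall>i<N. \<bar>F z i - z i\<bar> < \<epsilon>"
proof -
  obtain \<delta> where \<delta>: "\<delta> > 0" and F_close: "\<And>x y. x \<in> unit_cube N \<Longrightarrow> y \<in> unit_cube N \<Longrightarrow>
      cube_dist N x y < \<delta> \<Longrightarrow> cube_dist N (F x) (F y) < \<epsilon>/2"
    using unif[of "\<epsilon>/2"] \<epsilon> by auto
  obtain p :: nat where p: "max (N / \<delta>) (2 / \<epsilon>) < p"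
    using reals_Archimedean2 by blast
  have "0 < 2 / \<epsilon>"
    using \<epsilon> by simp
  then have p0: "0 < p"
    using p by linarith
  have p_\<delta>: "N / p < \<delta>" and p_\<epsilon>: "1 / p < \<epsilon>/2"
    using p p0 \<delta> \<epsilon> by (simp_all add: field_simps)
  let ?pt = "grid_point p N"
  obtain q where q: "\<forall>i<N. q i < p" and sign_change: "\<And>i. i < N \<Longrightarrow> \<exists>r s.
      (\<forall>j<N. q j \<le> r j \<and> r j \<le> q j + 1) \<and> (\<forall>j<N. q j \<le> s j \<and> s j \<le> q j + 1)
      \<and> ?pt r i \<le> F (?pt r) i \<and> F (?pt s) i \<le> ?pt s i"
    using kuhn_sign_change[where F=F, OF maps p0] by blast
  have q_cube: "?pt q \<in> unit_cube N"
    using q by (auto intro: grid_point_unit_cube[OF p0] less_imp_le)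
  have F_near: "\<bar>F (?pt x) i - F (?pt q) i\<bar> < \<epsilon>/2"
    if x: "\<forall>j<N. q j \<le> x j \<and> x j \<le> q j + 1" and i: "i < N" for x i
  proof -
    have x_cube: "?pt x \<in> unit_cube N"
      using grid_point_unit_cube[OF p0 grid_cell_le[OF q x]] .
    have "cube_dist N (?pt x) (?pt q) \<le> (\<Sum>j<N. 1 / p)"
      unfolding cube_dist_eq by (rule sum_mono) (rule abs_grid_point_diff[OF p0 x])
    then have "cube_dist N (?pt x) (?pt q) < \<delta>"
      using p_\<delta> by simp
    moreover have "\<bar>F (?pt x) i - F (?pt q) i\<bar> \<le> cube_dist N (F (?pt x)) (F (?pt q))"
      unfolding cube_dist_eq using i by (intro member_le_sum) auto
    ultimately show ?thesis
      using F_close[OF x_cube q_cube] by linarith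
  qed
  have "\<bar>F (?pt q) i - ?pt q i\<bar> < \<epsilon>" if i: "i < N" for i
  proof -
    obtain r s where r: "\<forall>j<N. q j \<le> r j \<and> r j \<le> q j + 1" and s: "\<forall>j<N. q j \<le> s j \<and> s j \<le> q j + 1"
      and "?pt r i \<le> F (?pt r) i" "F (?pt s) i \<le> ?pt s i"
      using sign_change[OF i] by blast
    then show ?thesis
      using F_near[OF r i] F_near[OF s i] abs_grid_point_diff[OF p0 r, of i] abs_grid_point_diff[OF p0 s, of i] p_\<epsilon>
      unfolding abs_less_iff abs_le_iff by linarith
  qed
  with q_cube show ?thesis
    by blast
qed

theorem brouwer_unit_cube:
  assumes maps: "\<And>x. x \<in> unit_cube N \<Longrightarrow> F x \<in> unit_cube N"
    and cont: "\<And>x. x \<in> unit_cube N \<Longrightarrow>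
      filterlim F (pnhds (unit_cube N) (cube_dist N) (F x)) (pnhds (unit_cube N) (cube_dist N) x)"
  shows "\<exists>x\<in>unit_cube N. F x = x"
proof -
  interpret cube: seq_compact_pmetric "unit_cube N" "cube_dist N"
    by (rule seq_compact_pmetric_unit_cube)
  have "\<exists>z\<in>unit_cube N. \<forall>i<N. \<bar>F z i - z i\<bar> < inverse (Suc j)" for j :: nat
  proof (rule approx_fixed_point_unit_cube[OF maps])
    show "\<exists>\<delta>>0. \<forall>x\<in>unit_cube N. \<forall>y\<in>unit_cube N. cube_dist N x y < \<delta> \<longrightarrow> cube_dist N (F x) (F y) < e"
      if "e > 0" for e
      using cube.uniformly_continuous[OF cube.pmetric_axioms _ cont that] maps by blast
  qed simp_all
  then obtain Z where Z: "\<And>j. Z j \<in> unit_cube N"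
    and Z_fix: "\<And>j i. i < N \<Longrightarrow> \<bar>F (Z j) i - Z j i\<bar> < inverse (Suc j)"
    by metis
  obtain x r where x: "x \<in> unit_cube N" and r: "strict_mono r"
    and lim: "(\<lambda>j. cube_dist N x (Z (r j))) \<longlonglongrightarrow> 0"
    using cube.convergent_subseq[of Z] Z by blast
  have "filterlim (\<lambda>j. F (Z (r j))) (pnhds (unit_cube N) (cube_dist N) (F x)) sequentially"
    by (rule filterlim_compose[OF cont[OF x] filterlim_pnhdsI]) (simp_all add: Z lim)
  then have lim_F: "(\<lambda>j. cube_dist N (F x) (F (Z (r j)))) \<longlonglongrightarrow> 0"
    by (rule cube.filterlim_pnhds_tendsto[OF maps[OF x]])
  note LIMSEQ_inverse_Suc_subseq[OF r]
  then have bound_lim: "(\<lambda>j. cube_dist N x (Z (r j)) + N * inverse (Suc (r j))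
      + cube_dist N (F x) (F (Z (r j)))) \<longlonglongrightarrow> 0"
    using lim lim_F tendsto_add_zero tendsto_mult_right_zero by blast
  have "cube_dist N x (F x) \<le> cube_dist N x (Z (r j)) + N * inverse (Suc (r j))
      + cube_dist N (F x) (F (Z (r j)))" for j
  proof -
    have "cube_dist N (Z (r j)) (F (Z (r j))) \<le> (\<Sum>i<N. inverse (Suc (r j)))"
      unfolding cube_dist_eq using Z_fix by (intro sum_mono) (simp add: abs_minus_commute less_imp_le)
    then show ?thesis
      using cube.triangle[OF x Z[of "r j"] maps[OF x]]
        cube.triangle[OF Z[of "r j"] maps[OF Z[of "r j"]] maps[OF x]]
        cube.sym[OF maps[OF Z[of "r j"]] maps[OF x]] by simp
  qed
  then have "cube_dist N x (F x) \<le> 0"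
    by (intro tendsto_le[OF sequentially_bot bound_lim tendsto_const]) simp
  with x show ?thesis
    using cube_dist_le_0_imp_eq[OF x maps[OF x]] by metis
qed

section \<open>Spaces of admissible controls\<close>

lemma vnorm_eq_L2_set: "vnorm d v = L2_set v {..<d}"
  by (simp add: vnorm_def L2_set_def)

lemma vnorm_nonneg: "0 \<le> vnorm d v"
  by (simp add: vnorm_eq_L2_set)

lemma abs_le_vnorm: "j < d \<Longrightarrow> \<bar>v j\<bar> \<le> vnorm d v"
  using member_le_L2_set[of "{..<d}" j "\<lambda>j. \<bar>v j\<bar>"] by (simp add: vnorm_eq_L2_set L2_set_def)

lemma vnorm_le_sum_abs: "vnorm d v \<le> (\<Sum>j<d. \<bar>v j\<bar>)"
  by (simp add: vnorm_eq_L2_set L2_set_le_sum_abs)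

lemma vnorm_triangle: "vnorm d (\<lambda>j. a j + b j) \<le> vnorm d a + vnorm d b"
  by (simp add: vnorm_eq_L2_set L2_set_triangle_ineq)

lemma vnorm_scale: "vnorm d (\<lambda>j. c * a j) = \<bar>c\<bar> * vnorm d a"
  by (simp add: vnorm_def power_mult_distrib sum_distrib_left[symmetric] real_sqrt_mult)

lemma vnorm_diff_commute: "vnorm d (\<lambda>j. a j - b j) = vnorm d (\<lambda>j. b j - a j)"
  by (simp add: vnorm_def power2_commute)

lemma vnorm_diff_le: "vnorm d (\<lambda>j. a j - b j) \<le> vnorm d a + vnorm d b"
  using vnorm_triangle[of d a "\<lambda>j. - b j"] by (simp add: vnorm_def)

lemma vnorm_sum:
  fixes N :: nat
  shows "vnorm d (\<lambda>j. \<Sum>l<N. f l j) \<le> (\<Sum>l<N. vnorm d (f l))"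
proof (induction N)
  case 0
  then show ?case
    by (simp add: vnorm_def)
next
  case (Suc N)
  have "vnorm d (\<lambda>j. \<Sum>l<Suc N. f l j) \<le> vnorm d (\<lambda>j. \<Sum>l<N. f l j) + vnorm d (f N)"
    using vnorm_triangle[of d "\<lambda>j. \<Sum>l<N. f l j" "f N"] by simp
  with Suc show ?case
    by simp
qed

lemma supdist_upper:
  assumes "\<forall>t\<in>{t0..t1}. vnorm d (u t) \<le> A" "\<forall>t\<in>{t0..t1}. vnorm d (v t) \<le> B" "t \<in> {t0..t1}"
  shows "vnorm d (\<lambda>j. u t j - v t j) \<le> supdist t0 t1 d u v"
  unfolding supdist_def
proof (rule cSUP_upper[OF assms(3)])
  show "bdd_above ((\<lambda>t. vnorm d (\<lambda>j. u t j - v t j)) ` {t0..t1})"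
    using order_trans[OF vnorm_diff_le add_mono] assms(1,2) by (intro bdd_aboveI2) blast
qed

lemma supdist_least:
  assumes "t0 \<le> t1" "\<And>t. t \<in> {t0..t1} \<Longrightarrow> vnorm d (\<lambda>j. u t j - v t j) \<le> c"
  shows "supdist t0 t1 d u v \<le> c"
  unfolding supdist_def by (rule cSUP_least) (use assms in auto)

lemma pmetric_supdist:
  assumes "t0 \<le> t1" and bounded: "\<forall>u\<in>U. \<forall>t\<in>{t0..t1}. vnorm d (u t) \<le> B"
  shows "pmetric U (supdist t0 t1 d)"
proof
  show "supdist t0 t1 d u u = 0" for u
    by (simp add: supdist_def vnorm_def assms(1))
  show "supdist t0 t1 d u v = supdist t0 t1 d v u" for u v
    unfolding supdist_def by (rule SUP_cong[OF refl vnorm_diff_commute])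
  fix u v w assume "u \<in> U" "v \<in> U" "w \<in> U"
  then have bounds: "\<forall>t\<in>{t0..t1}. vnorm d (u t) \<le> B" "\<forall>t\<in>{t0..t1}. vnorm d (v t) \<le> B"
    "\<forall>t\<in>{t0..t1}. vnorm d (w t) \<le> B"
    using bounded by auto
  show "supdist t0 t1 d u w \<le> supdist t0 t1 d u v + supdist t0 t1 d v w"
  proof (rule supdist_least[OF assms(1)])
    fix t assume t: "t \<in> {t0..t1}"
    have "vnorm d (\<lambda>j. u t j - w t j) \<le> vnorm d (\<lambda>j. u t j - v t j) + vnorm d (\<lambda>j. v t j - w t j)"
      using vnorm_triangle[of d "\<lambda>j. u t j - v t j" "\<lambda>j. v t j - w t j"] by simp
    also have "\<dots> \<le> supdist t0 t1 d u v + supdist t0 t1 d v w"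
      using supdist_upper[OF bounds(1,2) t] supdist_upper[OF bounds(2,3) t] by linarith
    finally show "vnorm d (\<lambda>j. u t j - w t j) \<le> supdist t0 t1 d u v + supdist t0 t1 d v w" .
  qed
qed

lemma supdist_tendsto_zero:
  assumes "t0 \<le> t1"
    and unif: "\<And>j. j < d \<Longrightarrow> uniform_limit {t0..t1} (\<lambda>n t. Y n t j) (\<lambda>t. u t j) sequentially"
  shows "(\<lambda>n. supdist t0 t1 d u (Y n)) \<longlonglongrightarrow> 0"
  unfolding tendsto_iff
proof (intro allI impI)
  fix e :: real assume "e > 0"
  define e' where "e' = e / (d + 1)"
  have "e' > 0"
    using \<open>e > 0\<close> by (simp add: e'_def)
  have "eventually (\<lambda>n. \<forall>t\<in>{t0..t1}. dist (Y n t j) (u t j) < e') sequentially" if "j \<in> {..<d}" for j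
    using uniform_limitD[OF unif \<open>e' > 0\<close>] that by simp
  then have "eventually (\<lambda>n. \<forall>j\<in>{..<d}. \<forall>t\<in>{t0..t1}. dist (Y n t j) (u t j) < e') sequentially"
    by (rule eventually_ball_finite[OF finite_lessThan, rule_format])
  then show "eventually (\<lambda>n. dist (supdist t0 t1 d u (Y n)) 0 < e) sequentially"
  proof (rule eventually_mono)
    fix n assume close: "\<forall>j\<in>{..<d}. \<forall>t\<in>{t0..t1}. dist (Y n t j) (u t j) < e'"
    have bound: "vnorm d (\<lambda>j. u t j - Y n t j) \<le> d * e'" if t: "t \<in> {t0..t1}" for t
    proof -
      have "vnorm d (\<lambda>j. u t j - Y n t j) \<le> (\<Sum>j<d. \<bar>u t j - Y n t j\<bar>)"
        by (rule vnorm_le_sum_abs)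
      also have "\<dots> \<le> (\<Sum>j<d. e')"
      proof (rule sum_mono)
        fix j assume "j \<in> {..<d}"
        with close t have "dist (Y n t j) (u t j) < e'"
          by blast
        then show "\<bar>u t j - Y n t j\<bar> \<le> e'"
          by (simp add: dist_real_def abs_minus_commute)
      qed
      finally show ?thesis
        by simp
    qed
    have "0 \<le> supdist t0 t1 d u (Y n)"
      unfolding supdist_def using assms(1) bound vnorm_nonneg
      by (intro cSUP_upper2[where x=t0] bdd_aboveI2[where M="d * e'"]) auto
    moreover have "supdist t0 t1 d u (Y n) \<le> d * e'"
      by (rule supdist_least[OF assms(1) bound])
    moreover have "d * e' < e"
      using \<open>e > 0\<close> by (simp add: e'_def field_simps)
    ultimately show "dist (supdist t0 t1 d u (Y n)) 0 < e"
      by simp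
  qed
qed

lemma admissible_abs_le:
  assumes "admissible t0 t1 d B U" "u \<in> U" "t \<in> {t0..t1}" "j < d"
  shows "\<bar>u t j\<bar> \<le> B"
proof -
  have "\<bar>u t j\<bar> \<le> vnorm d (u t)"
    using assms(4) by (rule abs_le_vnorm)
  also have "\<dots> \<le> B"
    using assms(1-3) by (simp add: admissible_def)
  finally show ?thesis .
qed

lemma admissible_equicontinuous:
  assumes adm: "admissible t0 t1 d B U" and "t \<in> {t0..t1}" "e > 0" "j < d"
  obtains \<delta> where "\<delta> > 0" "\<And>s u. s \<in> {t0..t1} \<Longrightarrow> u \<in> U \<Longrightarrow> \<bar>s - t\<bar> < \<delta> \<Longrightarrow> \<bar>u s j - u t j\<bar> < e"
proof -
  have "\<forall>t\<in>{t0..t1}. \<forall>e>0. \<exists>\<delta>>0. \<forall>s\<in>{t0..t1}. \<forall>u\<in>U. \<bar>s - t\<bar> < \<delta> \<longrightarrow> vnorm d (\<lambda>j. u s j - u t j) < e"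
    using adm by (simp add: admissible_def)
  then obtain \<delta> where "\<delta> > 0"
    and \<delta>: "\<forall>s\<in>{t0..t1}. \<forall>u\<in>U. \<bar>s - t\<bar> < \<delta> \<longrightarrow> vnorm d (\<lambda>j. u s j - u t j) < e"
    using assms(2,3) by blast
  have "\<bar>u s j - u t j\<bar> < e" if "s \<in> {t0..t1}" "u \<in> U" "\<bar>s - t\<bar> < \<delta>" for s u
  proof -
    have "\<bar>u s j - u t j\<bar> \<le> vnorm d (\<lambda>j. u s j - u t j)"
      by (rule abs_le_vnorm[OF assms(4)])
    also have "\<dots> < e"
      using \<delta> that by blast
    finally show ?thesis .
  qed
  with \<open>\<delta> > 0\<close> show ?thesis
    using that by blast
qed

lemma admissible_coordinate_subseq:
  assumes adm: "admissible t0 t1 d B U" and Y: "\<And>n. Y n \<in> U" and j: "j < d"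
  obtains r :: "nat \<Rightarrow> nat" and g where "strict_mono r" "continuous_on {t0..t1} g"
    "uniform_limit {t0..t1} (\<lambda>n t. Y (r n) t j) g sequentially"
proof -
  have bound: "norm (Y n t j) \<le> B" if "t \<in> {t0..t1}" for n t
    using admissible_abs_le[OF adm Y that j] by simp
  have equicont: "\<exists>\<delta>. 0 < \<delta> \<and> (\<forall>n s. s \<in> {t0..t1} \<and> norm (t - s) < \<delta> \<longrightarrow> norm (Y n t j - Y n s j) < e)"
    if t: "t \<in> {t0..t1}" and e: "e > 0" for t e
  proof -
    obtain \<delta> where "\<delta> > 0"
      and \<delta>: "\<And>s u. s \<in> {t0..t1} \<Longrightarrow> u \<in> U \<Longrightarrow> \<bar>s - t\<bar> < \<delta> \<Longrightarrow> \<bar>u s j - u t j\<bar> < e"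
      using admissible_equicontinuous[OF adm t e j] by blast
    have "norm (Y n t j - Y n s j) < e" if "s \<in> {t0..t1}" "norm (t - s) < \<delta>" for n s
      using \<delta>[OF that(1) Y] that(2) by (simp add: abs_minus_commute)
    with \<open>\<delta> > 0\<close> show ?thesis
      by blast
  qed
  obtain g r where g: "continuous_on {t0..t1} g" and r: "strict_mono (r :: nat \<Rightarrow> nat)"
    and conv: "\<And>e. 0 < e \<Longrightarrow> \<exists>N. \<forall>n t. n \<ge> N \<and> t \<in> {t0..t1} \<longrightarrow> norm (Y (r n) t j - g t) < e"
    using Arzela_Ascoli[OF compact_Icc bound equicont] by blast
  have "uniform_limit {t0..t1} (\<lambda>n t. Y (r n) t j) g sequentially"
  proof (rule uniform_limitI)
    fix e :: real assume "e > 0"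
    then obtain N where "\<forall>n t. n \<ge> N \<and> t \<in> {t0..t1} \<longrightarrow> norm (Y (r n) t j - g t) < e"
      using conv by blast
    then have "\<forall>n\<ge>N. \<forall>t\<in>{t0..t1}. dist (Y (r n) t j) (g t) < e"
      by (simp add: dist_norm)
    then show "\<forall>\<^sub>F n in sequentially. \<forall>t\<in>{t0..t1}. dist (Y (r n) t j) (g t) < e"
      unfolding eventually_sequentially by blast
  qed
  with g r show ?thesis
    using that by blast
qed

lemma admissible_uniform_subseq:
  assumes adm: "admissible t0 t1 d B U" and X: "\<And>n. X n \<in> U"
  obtains r :: "nat \<Rightarrow> nat" and g where "strict_mono r"
    and "\<And>j. j < d \<Longrightarrow> continuous_on {t0..t1} (g j)"
    and "\<And>j. j < d \<Longrightarrow> uniform_limit {t0..t1} (\<lambda>n t. X (r n) t j) (g j) sequentially"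
proof -
  define P where "P j Y \<longleftrightarrow> (\<exists>g. continuous_on {t0..t1} g \<and> uniform_limit {t0..t1} (\<lambda>n t. Y n t j) g sequentially)"
    for j and Y :: "nat \<Rightarrow> real \<Rightarrow> nat \<Rightarrow> real"
  have "\<exists>r::nat \<Rightarrow> nat. strict_mono r \<and> (\<forall>j\<in>{..<d}. P j (X \<circ> r))"
  proof (rule simultaneous_subseq[OF finite_lessThan _ _ X])
    fix j and Y :: "nat \<Rightarrow> real \<Rightarrow> nat \<Rightarrow> real" assume "j \<in> {..<d}" and Y: "\<And>n. Y n \<in> U"
    then obtain r :: "nat \<Rightarrow> nat" and g where "strict_mono r" "continuous_on {t0..t1} g"
      "uniform_limit {t0..t1} (\<lambda>n t. Y (r n) t j) g sequentially"
      using admissible_coordinate_subseq[where Y=Y, OF adm Y] by blast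
    then show "\<exists>r::nat \<Rightarrow> nat. strict_mono r \<and> P j (Y \<circ> r)"
      unfolding P_def o_def by blast
  next
    fix j Y and r :: "nat \<Rightarrow> nat" assume "P j Y" and r: "strict_mono r"
    then obtain g where "continuous_on {t0..t1} g" and lim: "uniform_limit {t0..t1} (\<lambda>n t. Y n t j) g sequentially"
      unfolding P_def by blast
    moreover have "uniform_limit {t0..t1} (\<lambda>n t. Y (r n) t j) g sequentially"
      by (rule filterlim_compose[OF lim filterlim_subseq[OF r]])
    ultimately show "P j (Y \<circ> r)"
      unfolding P_def o_def by blast
  qed
  then obtain r :: "nat \<Rightarrow> nat" where "strict_mono r"
    and "\<forall>j\<in>{..<d}. \<exists>g. continuous_on {t0..t1} g \<and> uniform_limit {t0..t1} (\<lambda>n t. X (r n) t j) g sequentially"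
    unfolding P_def o_def by blast
  moreover from this(2) obtain g where "\<forall>j\<in>{..<d}. continuous_on {t0..t1} (g j)
      \<and> uniform_limit {t0..t1} (\<lambda>n t. X (r n) t j) (g j) sequentially"
    by (rule bchoice[elim_format]) blast
  ultimately show ?thesis
    using that by blast
qed

lemma Cspace_of_coordinates:
  assumes "\<And>j. j < d \<Longrightarrow> continuous_on {t0..t1} (g j)"
  shows "(\<lambda>t j. if t \<in> {t0..t1} \<and> j < d then g j t else 0) \<in> Cspace t0 t1 d"
proof -
  have "continuous_on {t0..t1} (\<lambda>t. if t \<in> {t0..t1} \<and> j < d then g j t else 0)" for j
  proof (cases "j < d")
    case True
    from assms[OF True] show ?thesis
      by (rule continuous_on_eq) (simp add: True)
  qed simp
  then show ?thesis
    by (auto simp: Cspace_def intro: continuous_on_coordinatewise_then_product)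
qed

lemma seq_compact_pmetric_admissible:
  assumes "t0 < t1" and adm: "admissible t0 t1 d B U"
  shows "seq_compact_pmetric U (supdist t0 t1 d)"
proof -
  have "\<forall>u\<in>U. \<forall>t\<in>{t0..t1}. vnorm d (u t) \<le> B"
    using adm by (simp add: admissible_def)
  then interpret pmetric U "supdist t0 t1 d"
    using \<open>t0 < t1\<close> by (intro pmetric_supdist) auto
  show ?thesis
  proof
    fix X :: "nat \<Rightarrow> real \<Rightarrow> nat \<Rightarrow> real" assume X: "\<And>n. X n \<in> U"
    obtain r :: "nat \<Rightarrow> nat" and g where r: "strict_mono r"
      and g_cont: "\<And>j. j < d \<Longrightarrow> continuous_on {t0..t1} (g j)"
      and g_lim: "\<And>j. j < d \<Longrightarrow> uniform_limit {t0..t1} (\<lambda>n t. X (r n) t j) (g j) sequentially"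
      using admissible_uniform_subseq[where X=X, OF adm X] by blast
    define u where "u t j = (if t \<in> {t0..t1} \<and> j < d then g j t else 0)" for t j
    have "uniform_limit {t0..t1} (\<lambda>n t. X (r n) t j) (\<lambda>t. u t j) sequentially" if "j < d" for j
    proof -
      have "uniform_limit {t0..t1} (\<lambda>n t. X (r n) t j) (\<lambda>t. u t j) sequentially
          \<longleftrightarrow> uniform_limit {t0..t1} (\<lambda>n t. X (r n) t j) (g j) sequentially"
        by (rule uniform_limit_cong') (simp_all add: u_def that)
      with g_lim[OF that] show ?thesis
        by simp
    qed
    then have lim: "(\<lambda>n. supdist t0 t1 d u (X (r n))) \<longlonglongrightarrow> 0"
      using \<open>t0 < t1\<close> by (intro supdist_tendsto_zero) auto
    have "u \<in> Cspace t0 t1 d"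
      unfolding u_def using g_cont by (rule Cspace_of_coordinates)
    moreover have "\<exists>v\<in>U. supdist t0 t1 d u v < e" if "e > 0" for e
      using order_tendstoD(2)[OF lim that] X by (auto simp: eventually_sequentially)
    moreover have "\<forall>u\<in>Cspace t0 t1 d. (\<forall>e>0. \<exists>v\<in>U. supdist t0 t1 d u v < e) \<longrightarrow> u \<in> U"
      using adm by (simp add: admissible_def)
    ultimately have "u \<in> U"
      by blast
    with r lim show "\<exists>u\<in>U. \<exists>r::nat \<Rightarrow> nat. strict_mono r \<and> (\<lambda>n. supdist t0 t1 d u (X (r n))) \<longlonglongrightarrow> 0"
      by blast
  qed
qed

definition comb :: "nat \<Rightarrow> (nat \<Rightarrow> real) \<Rightarrow> (nat \<Rightarrow> real \<Rightarrow> nat \<Rightarrow> real) \<Rightarrow> real \<Rightarrow> nat \<Rightarrow> real" where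
  "comb N a V = (\<lambda>t j. \<Sum>l<N. a l * V l t j)"

lemma convex_ctrl_comb:
  assumes C: "convex_ctrl C"
  shows "(\<forall>l<N. 0 \<le> a l) \<Longrightarrow> (\<Sum>l<N. a l) = 1 \<Longrightarrow> (\<forall>l<N. 0 < a l \<longrightarrow> V l \<in> C) \<Longrightarrow> comb N a V \<in> C"
proof (induction N arbitrary: a)
  case 0
  then show ?case
    by simp
next
  case (Suc N)
  define s where "s = (\<Sum>l<N. a l)"
  have "0 \<le> s"
    unfolding s_def using Suc.prems(1) by (intro sum_nonneg) simp
  have a_N: "a N = 1 - s"
    using Suc.prems(2) by (simp add: s_def)
  show ?case
  proof (cases "s = 0")
    case True
    moreover have "\<forall>l<N. 0 \<le> a l"
      using Suc.prems(1) by simp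
    ultimately have "\<forall>l<N. a l = 0"
      unfolding s_def by (subst (asm) sum_nonneg_eq_0_iff) auto
    then show ?thesis
      using a_N True Suc.prems(3) by (simp add: comb_def)
  next
    case False
    then have "0 < s"
      using \<open>0 \<le> s\<close> by simp
    have IH: "comb N (\<lambda>l. a l / s) V \<in> C"
      using Suc.prems \<open>0 < s\<close>
      by (intro Suc.IH) (simp_all add: s_def sum_divide_distrib[symmetric] zero_less_divide_iff)
    have comb_Suc: "comb (Suc N) a V = cmb s (comb N (\<lambda>l. a l / s) V) (V N)"
      using \<open>0 < s\<close> a_N by (simp add: comb_def cmb_def fun_eq_iff sum_distrib_left)
    show ?thesis
    proof (cases "a N = 0")
      case True
      then show ?thesis
        using IH a_N by (simp add: comb_Suc cmb_def)
    next
      case False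
      then have "V N \<in> C" "s \<le> 1"
        using Suc.prems(1,3) a_N by auto
      then show ?thesis
        using C IH \<open>0 \<le> s\<close> unfolding comb_Suc convex_ctrl_def by simp
    qed
  qed
qed

lemma vnorm_comb_diff:
  "vnorm d (\<lambda>j. comb N a V t j - comb N b V t j) \<le> (\<Sum>l<N. \<bar>a l - b l\<bar> * vnorm d (V l t))"
proof -
  have "vnorm d (\<lambda>j. comb N a V t j - comb N b V t j) = vnorm d (\<lambda>j. \<Sum>l<N. (a l - b l) * V l t j)"
    by (simp add: comb_def sum_subtractf[symmetric] left_diff_distrib)
  also have "\<dots> \<le> (\<Sum>l<N. vnorm d (\<lambda>j. (a l - b l) * V l t j))"
    by (rule vnorm_sum)
  finally show ?thesis
    by (simp add: vnorm_scale)
qed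

section \<open>Equilibria of games with quasi-concave payoffs\<close>

lemma abs_divide_diff_le:
  fixes x x' a a' :: real
  assumes "0 \<le> x'" "x' \<le> 1" "1 \<le> a" "1 \<le> a'"
  shows "\<bar>x / a - x' / a'\<bar> \<le> \<bar>x - x'\<bar> + \<bar>a - a'\<bar>"
proof -
  have "x / a - x' / a' = (x - x') / a + x' / a' * ((a' - a) / a)"
    using assms by (simp add: field_simps)
  then have "\<bar>x / a - x' / a'\<bar> \<le> \<bar>(x - x') / a\<bar> + \<bar>x' / a' * ((a' - a) / a)\<bar>"
    by (simp only: abs_triangle_ineq)
  moreover have "\<bar>(x - x') / a\<bar> \<le> \<bar>x - x'\<bar>"
    using assms by (simp add: abs_div divide_le_eq mult_le_cancel_left1)
  moreover have "\<bar>a - a'\<bar> / a \<le> \<bar>a - a'\<bar> / 1"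
    using assms by (intro divide_left_mono) auto
  then have "\<bar>x' / a' * ((a' - a) / a)\<bar> \<le> 1 * \<bar>a - a'\<bar>"
    using assms unfolding abs_mult
    by (intro mult_mono) (simp_all add: abs_div abs_minus_commute)
  ultimately show ?thesis
    by linarith
qed

locale control_game =
  fixes n :: nat and t0 t1 :: real and m :: "nat \<Rightarrow> nat" and M :: "nat \<Rightarrow> real"
    and U :: "nat \<Rightarrow> (real \<Rightarrow> nat \<Rightarrow> real) set"
  assumes players: "1 \<le> n" and horizon: "t0 < t1"
    and admissible: "\<And>k. k \<in> {1..n} \<Longrightarrow> admissible t0 t1 (m k) (M k) (U k)"
    and convex: "\<And>k. k \<in> {1..n} \<Longrightarrow> convex_ctrl (U k)"
begin

abbreviation profile_dist :: "(nat \<Rightarrow> real \<Rightarrow> nat \<Rightarrow> real) \<Rightarrow> (nat \<Rightarrow> real \<Rightarrow> nat \<Rightarrow> real) \<Rightarrow> real" where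
  "profile_dist \<equiv> sum_dist {1..n} (\<lambda>k. supdist t0 t1 (m k))"

abbreviation near :: "(nat \<Rightarrow> real \<Rightarrow> nat \<Rightarrow> real) \<Rightarrow> (nat \<Rightarrow> real \<Rightarrow> nat \<Rightarrow> real) filter" where
  "near p \<equiv> pnhds (Prof n U) profile_dist p"

lemma supdist_nonneg: "k \<in> {1..n} \<Longrightarrow> u \<in> U k \<Longrightarrow> v \<in> U k \<Longrightarrow> 0 \<le> supdist t0 t1 (m k) u v"
  by (rule pmetric.nonneg[OF seq_compact_pmetric.axioms(1)[OF seq_compact_pmetric_admissible[OF horizon admissible]]])

lemma Prof_eq_prod_space: "Prof n U = prod_space {1..n} U (\<lambda>t j. 0)"
  by (simp add: Prof_def prod_space_def)

sublocale profiles: seq_compact_pmetric "Prof n U" profile_dist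
  unfolding Prof_eq_prod_space
  using seq_compact_pmetric_admissible[OF horizon admissible] by (intro seq_compact_pmetric_prod_space) auto

lemma Prof_update: "p \<in> Prof n U \<Longrightarrow> i \<in> {1..n} \<Longrightarrow> v \<in> U i \<Longrightarrow> p(i := v) \<in> Prof n U"
  by (auto simp: Prof_def)

lemma eventually_near_Prof: "eventually (\<lambda>q. q \<in> Prof n U) (near p)"
  unfolding eventually_pnhds by (intro exI[of _ 1]) simp

lemma supdist_le_profile_dist:
  assumes "p \<in> Prof n U" "q \<in> Prof n U" "k \<in> {1..n}"
  shows "supdist t0 t1 (m k) (p k) (q k) \<le> profile_dist p q"
  unfolding sum_dist_def
proof (rule member_le_sum[OF assms(3)])
  fix k' assume "k' \<in> {1..n} - {k}"
  then have k': "k' \<in> {1..n}"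
    by simp
  then have "p k' \<in> U k'" "q k' \<in> U k'"
    using assms by (simp_all add: Prof_def)
  then show "0 \<le> supdist t0 t1 (m k') (p k') (q k')"
    by (rule supdist_nonneg[OF k'])
qed simp

lemma profile_dist_update_le:
  assumes "p \<in> Prof n U" "q \<in> Prof n U" "i \<in> {1..n}"
  shows "profile_dist (p(i := v)) (q(i := v)) \<le> profile_dist p q"
  unfolding sum_dist_def
proof (rule sum_mono)
  fix k assume k: "k \<in> {1..n}"
  show "supdist t0 t1 (m k) ((p(i := v)) k) ((q(i := v)) k) \<le> supdist t0 t1 (m k) (p k) (q k)"
  proof (cases "k = i")
    case True
    have "p k \<in> U k" "q k \<in> U k"
      using assms k by (simp_all add: Prof_def)
    then have "0 \<le> supdist t0 t1 (m k) (p k) (q k)"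
      by (rule supdist_nonneg[OF k])
    with True horizon show ?thesis
      by (simp add: supdist_def vnorm_def)
  qed simp
qed

lemma filterlim_update:
  assumes "p \<in> Prof n U" "i \<in> {1..n}" "v \<in> U i"
  shows "filterlim (\<lambda>q. q(i := v)) (near (p(i := v))) (near p)"
proof (rule filterlim_pnhdsI)
  show "eventually (\<lambda>q. q(i := v) \<in> Prof n U) (near p)"
    using eventually_near_Prof by (rule eventually_mono) (rule Prof_update[OF _ assms(2,3)])
  have lim: "((\<lambda>q. profile_dist p q) \<longlongrightarrow> 0) (near p)"
    by (rule profiles.filterlim_pnhds_tendsto[OF assms(1) filterlim_ident])
  have lower: "eventually (\<lambda>q. 0 \<le> profile_dist (p(i := v)) (q(i := v))) (near p)"
    using eventually_near_Prof
    by (rule eventually_mono) (intro profiles.nonneg Prof_update assms)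
  have upper: "eventually (\<lambda>q. profile_dist (p(i := v)) (q(i := v)) \<le> profile_dist p q) (near p)"
    using eventually_near_Prof by (rule eventually_mono) (rule profile_dist_update_le[OF assms(1) _ assms(2)])
  show "((\<lambda>q. profile_dist (p(i := v)) (q(i := v))) \<longlongrightarrow> 0) (near p)"
    by (rule tendsto_sandwich[OF lower upper tendsto_const lim])
qed

end

locale deviation_cover = control_game +
  fixes \<phi> :: "nat \<Rightarrow> (nat \<Rightarrow> real \<Rightarrow> nat \<Rightarrow> real) \<Rightarrow> real"
    and N :: nat and idx :: "nat \<Rightarrow> nat" and dev :: "nat \<Rightarrow> real \<Rightarrow> nat \<Rightarrow> real"
  assumes payoff_cont: "\<And>i p. i \<in> {1..n} \<Longrightarrow> p \<in> Prof n U \<Longrightarrow> (\<phi> i \<longlongrightarrow> \<phi> i p) (near p)"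
    and payoff_qc: "\<And>i p c. i \<in> {1..n} \<Longrightarrow> p \<in> Prof n U \<Longrightarrow> convex_ctrl {v \<in> U i. c < \<phi> i (p(i := v))}"
    and deviation: "\<And>l. l < N \<Longrightarrow> idx l \<in> {1..n} \<and> dev l \<in> U (idx l)"
    and covers: "\<And>p. p \<in> Prof n U \<Longrightarrow> \<exists>l<N. \<phi> (idx l) p < \<phi> (idx l) (p(idx l := dev l))"
begin

definition gain :: "nat \<Rightarrow> (nat \<Rightarrow> real \<Rightarrow> nat \<Rightarrow> real) \<Rightarrow> real" where
  "gain l p = max 0 (\<phi> (idx l) (p(idx l := dev l)) - \<phi> (idx l) p)"

definition player_gain :: "nat \<Rightarrow> (nat \<Rightarrow> real \<Rightarrow> nat \<Rightarrow> real) \<Rightarrow> real" where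
  "player_gain k p = (\<Sum>l<N. if idx l = k then gain l p else 0)"

definition max_gain :: "(nat \<Rightarrow> real \<Rightarrow> nat \<Rightarrow> real) \<Rightarrow> real" where
  "max_gain p = Max ((\<lambda>k. player_gain k p) ` {1..n})"

definition weights :: "(nat \<Rightarrow> real \<Rightarrow> nat \<Rightarrow> real) \<Rightarrow> nat \<Rightarrow> real" where
  "weights p l = (if l < N then gain l p / max_gain p else 0)"

lemma gain_nonneg: "0 \<le> gain l p"
  by (simp add: gain_def)

lemma gain_le_player_gain:
  assumes "l < N"
  shows "gain l p \<le> player_gain (idx l) p"
proof -
  have "(if idx l = idx l then gain l p else 0) \<le> (\<Sum>l'<N. if idx l' = idx l then gain l' p else 0)"
    by (rule member_le_sum) (simp_all add: assms gain_nonneg)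
  then show ?thesis
    by (simp add: player_gain_def)
qed

lemma player_gain_le_max_gain: "k \<in> {1..n} \<Longrightarrow> player_gain k p \<le> max_gain p"
  unfolding max_gain_def by (rule Max_ge) auto

lemma max_gain_attained: "\<exists>k\<in>{1..n}. max_gain p = player_gain k p"
proof -
  have "max_gain p \<in> (\<lambda>k. player_gain k p) ` {1..n}"
    unfolding max_gain_def using players by (intro Max_in) auto
  then show ?thesis
    by auto
qed

lemma max_gain_pos: "p \<in> Prof n U \<Longrightarrow> 0 < max_gain p"
proof -
  assume "p \<in> Prof n U"
  then obtain l where l: "l < N" and "\<phi> (idx l) p < \<phi> (idx l) (p(idx l := dev l))"
    using covers by blast
  then have "0 < gain l p"
    by (simp add: gain_def)
  also have "\<dots> \<le> player_gain (idx l) p"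
    by (rule gain_le_player_gain[OF l])
  also have "\<dots> \<le> max_gain p"
    using deviation[OF l] by (intro player_gain_le_max_gain) simp
  finally show ?thesis .
qed

lemma weights_unit_cube:
  assumes p: "p \<in> Prof n U"
  shows "weights p \<in> unit_cube N"
proof -
  have "0 \<le> gain l p / max_gain p \<and> gain l p / max_gain p \<le> 1" if l: "l < N" for l
  proof -
    have "gain l p \<le> max_gain p"
      using gain_le_player_gain[OF l] player_gain_le_max_gain deviation[OF l] by (meson order_trans)
    then show ?thesis
      using max_gain_pos[OF p] gain_nonneg by simp
  qed
  then show ?thesis
    by (simp add: mem_unit_cube weights_def)
qed

lemma tendsto_gain:
  assumes "l < N" "p \<in> Prof n U"
  shows "(gain l \<longlongrightarrow> gain l p) (near p)"
proof -
  have i: "idx l \<in> {1..n}" and v: "dev l \<in> U (idx l)"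
    using deviation[OF assms(1)] by auto
  have "((\<lambda>q. \<phi> (idx l) (q(idx l := dev l))) \<longlongrightarrow> \<phi> (idx l) (p(idx l := dev l))) (near p)"
    by (rule filterlim_compose[OF payoff_cont[OF i Prof_update[OF assms(2) i v]] filterlim_update[OF assms(2) i v]])
  moreover have "(\<phi> (idx l) \<longlongrightarrow> \<phi> (idx l) p) (near p)"
    by (rule payoff_cont[OF i assms(2)])
  ultimately show ?thesis
    unfolding gain_def by (intro tendsto_max tendsto_const tendsto_diff)
qed

lemma tendsto_max_gain:
  assumes "p \<in> Prof n U"
  shows "(max_gain \<longlongrightarrow> max_gain p) (near p)"
proof -
  have "((\<lambda>q. player_gain k q) \<longlongrightarrow> player_gain k p) (near p)" for k
    unfolding player_gain_def using tendsto_gain[OF _ assms] by (intro tendsto_sum) auto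
  then have "((\<lambda>q. Sup ((\<lambda>k. player_gain k q) ` {1..n})) \<longlongrightarrow> Sup ((\<lambda>k. player_gain k p) ` {1..n})) (near p)"
    by (intro tendsto_Sup) auto
  moreover have "Sup ((\<lambda>k. player_gain k q) ` {1..n}) = max_gain q" for q
    unfolding max_gain_def using players by (intro cSup_eq_Max) auto
  ultimately show ?thesis
    by simp
qed

lemma filterlim_weights:
  assumes p: "p \<in> Prof n U"
  shows "filterlim weights (pnhds (unit_cube N) (cube_dist N) (weights p)) (near p)"
proof (rule filterlim_pnhdsI)
  show "eventually (\<lambda>q. weights q \<in> unit_cube N) (near p)"
    using eventually_near_Prof by (rule eventually_mono) (rule weights_unit_cube)
  have "((\<lambda>q. weights q l) \<longlongrightarrow> weights p l) (near p)" for l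
  proof (cases "l < N")
    case True
    have "((\<lambda>q. gain l q / max_gain q) \<longlongrightarrow> gain l p / max_gain p) (near p)"
      using max_gain_pos[OF p] by (intro tendsto_divide tendsto_gain[OF True p] tendsto_max_gain[OF p]) simp
    then show ?thesis
      by (simp add: weights_def True)
  qed (simp add: weights_def)
  then have "((\<lambda>q. \<Sum>l<N. \<bar>weights p l - weights q l\<bar>) \<longlongrightarrow> (\<Sum>l<N. \<bar>weights p l - weights p l\<bar>)) (near p)"
    by (intro tendsto_sum tendsto_rabs tendsto_diff tendsto_const)
  then show "((\<lambda>q. cube_dist N (weights p) (weights q)) \<longlongrightarrow> 0) (near p)"
    by (simp add: cube_dist_eq)
qed

(* A point x of the cube becomes a profile in which player k plays the convex combination of
   their deviations with weights x l, renormalised when these sum to more than 1 and completed by a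
   fallback control otherwise. *)
definition share :: "nat \<Rightarrow> (nat \<Rightarrow> real) \<Rightarrow> real" where
  "share k x = (\<Sum>l<N. if idx l = k then x l else 0)"

definition mix_weight :: "nat \<Rightarrow> (nat \<Rightarrow> real) \<Rightarrow> nat \<Rightarrow> real" where
  "mix_weight k x l =
     (if l < N then if idx l = k then x l else 0 else max 0 (1 - share k x)) / max 1 (share k x)"

definition fallback :: "nat \<Rightarrow> real \<Rightarrow> nat \<Rightarrow> real" where
  "fallback k = (SOME u. u \<in> U k)"

definition mix_ctrl :: "nat \<Rightarrow> nat \<Rightarrow> real \<Rightarrow> nat \<Rightarrow> real" where
  "mix_ctrl k l = (if l < N \<and> idx l = k then dev l else fallback k)"

definition mix :: "(nat \<Rightarrow> real) \<Rightarrow> nat \<Rightarrow> real \<Rightarrow> nat \<Rightarrow> real" where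
  "mix x k = (if k \<in> {1..n} then comb (Suc N) (mix_weight k x) (mix_ctrl k) else (\<lambda>t j. 0))"

lemma mix_ctrl_mem: "k \<in> {1..n} \<Longrightarrow> mix_ctrl k l \<in> U k"
  using admissible[of k] deviation[of l]
  by (auto simp: mix_ctrl_def fallback_def admissible_def some_in_eq)

lemma share_nonneg: "x \<in> unit_cube N \<Longrightarrow> 0 \<le> share k x"
  unfolding share_def mem_unit_cube by (intro sum_nonneg) simp

lemma mix_weight_nonneg: "x \<in> unit_cube N \<Longrightarrow> 0 \<le> mix_weight k x l"
  by (simp add: mix_weight_def mem_unit_cube)

lemma sum_mix_weight:
  assumes x: "x \<in> unit_cube N"
  shows "(\<Sum>l<Suc N. mix_weight k x l) = 1"
proof -
  have "(\<Sum>l<Suc N. mix_weight k x l) = (share k x + max 0 (1 - share k x)) / max 1 (share k x)"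
    by (simp add: mix_weight_def share_def sum_divide_distrib add_divide_distrib)
  also have "\<dots> = 1"
    using share_nonneg[OF x, of k] by (simp add: max_def)
  finally show ?thesis .
qed

lemma mix_Prof: "x \<in> unit_cube N \<Longrightarrow> mix x \<in> Prof n U"
  using convex_ctrl_comb[OF convex] mix_weight_nonneg sum_mix_weight mix_ctrl_mem
  by (auto simp: Prof_def mix_def)

lemma abs_share_diff: "\<bar>share k x - share k y\<bar> \<le> cube_dist N x y"
proof -
  have "\<bar>share k x - share k y\<bar> \<le> (\<Sum>l<N. \<bar>(if idx l = k then x l else 0) - (if idx l = k then y l else 0)\<bar>)"
    unfolding share_def sum_subtractf[symmetric] by (rule sum_abs)
  also have "\<dots> \<le> cube_dist N x y"
    unfolding cube_dist_eq by (intro sum_mono) simp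
  finally show ?thesis .
qed

lemma mix_weight_lipschitz:
  assumes x: "x \<in> unit_cube N" and y: "y \<in> unit_cube N"
  shows "\<bar>mix_weight k x l - mix_weight k y l\<bar> \<le> 2 * cube_dist N x y"
proof -
  define num where "num z = (if l < N then if idx l = k then z l else 0 else max 0 (1 - share k z))" for z
  have num_diff: "\<bar>num x - num y\<bar> \<le> cube_dist N x y"
  proof (cases "l < N")
    case True
    then have "\<bar>x l - y l\<bar> \<le> cube_dist N x y"
      unfolding cube_dist_eq by (intro member_le_sum) auto
    then show ?thesis
      using True by (simp add: num_def cube_dist_eq sum_nonneg)
  next
    case False
    then show ?thesis
      using abs_share_diff[of k x y] by (simp add: num_def abs_le_iff max_def)
  qed
  have "0 \<le> num y" "num y \<le> 1"
    using y share_nonneg[OF y, of k] by (auto simp: num_def mem_unit_cube)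
  then have "\<bar>mix_weight k x l - mix_weight k y l\<bar> \<le> \<bar>num x - num y\<bar> + \<bar>max 1 (share k x) - max 1 (share k y)\<bar>"
    unfolding mix_weight_def num_def[symmetric] by (intro abs_divide_diff_le) auto
  also have "\<dots> \<le> 2 * cube_dist N x y"
  proof -
    have "\<bar>max 1 (share k x) - max 1 (share k y)\<bar> \<le> \<bar>share k x - share k y\<bar>"
      by (auto simp: max_def abs_le_iff)
    then show ?thesis
      using num_diff abs_share_diff[of k x y] by linarith
  qed
  finally show ?thesis .
qed

lemma profile_dist_mix_le:
  assumes x: "x \<in> unit_cube N" and y: "y \<in> unit_cube N"
  shows "profile_dist (mix x) (mix y) \<le> (\<Sum>k\<in>{1..n}. M k) * (2 * Suc N) * cube_dist N x y"
proof -
  have "supdist t0 t1 (m k) (mix x k) (mix y k) \<le> M k * (2 * Suc N) * cube_dist N x y"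
    if k: "k \<in> {1..n}" for k
  proof (rule supdist_least)
    fix t assume t: "t \<in> {t0..t1}"
    have "mix x k = comb (Suc N) (mix_weight k x) (mix_ctrl k)"
      and "mix y k = comb (Suc N) (mix_weight k y) (mix_ctrl k)"
      using k by (simp_all add: mix_def)
    then have "vnorm (m k) (\<lambda>j. mix x k t j - mix y k t j)
        \<le> (\<Sum>l<Suc N. \<bar>mix_weight k x l - mix_weight k y l\<bar> * vnorm (m k) (mix_ctrl k l t))"
      by (simp only: vnorm_comb_diff)
    also have "\<dots> \<le> (\<Sum>l<Suc N. 2 * cube_dist N x y * M k)"
    proof (rule sum_mono)
      fix l
      have "vnorm (m k) (mix_ctrl k l t) \<le> M k"
        using admissible[OF k] mix_ctrl_mem[OF k, of l] t by (auto simp: admissible_def)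
      then show "\<bar>mix_weight k x l - mix_weight k y l\<bar> * vnorm (m k) (mix_ctrl k l t) \<le> 2 * cube_dist N x y * M k"
        using mix_weight_lipschitz[OF x y]
        by (intro mult_mono) (simp_all add: vnorm_nonneg cube_dist_eq sum_nonneg)
    qed
    finally show "vnorm (m k) (\<lambda>j. mix x k t j - mix y k t j) \<le> M k * (2 * Suc N) * cube_dist N x y"
      by (simp add: algebra_simps)
  qed (use horizon in simp)
  then have "profile_dist (mix x) (mix y) \<le> (\<Sum>k\<in>{1..n}. M k * (2 * Suc N) * cube_dist N x y)"
    unfolding sum_dist_def by (rule sum_mono)
  then show ?thesis
    by (simp only: sum_distrib_right)
qed

lemma filterlim_mix:
  assumes x: "x \<in> unit_cube N"
  shows "filterlim mix (near (mix x)) (pnhds (unit_cube N) (cube_dist N) x)"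
proof (rule filterlim_pnhdsI)
  have in_cube: "eventually (\<lambda>y. y \<in> unit_cube N) (pnhds (unit_cube N) (cube_dist N) x)"
    unfolding eventually_pnhds by (intro exI[of _ 1]) simp
  then show "eventually (\<lambda>y. mix y \<in> Prof n U) (pnhds (unit_cube N) (cube_dist N) x)"
    by (rule eventually_mono) (rule mix_Prof)
  define C where "C = (\<Sum>k\<in>{1..n}. M k) * (2 * Suc N)"
  have "((\<lambda>y. cube_dist N x y) \<longlongrightarrow> 0) (pnhds (unit_cube N) (cube_dist N) x)"
    using seq_compact_pmetric.axioms(1)[OF seq_compact_pmetric_unit_cube]
    by (rule pmetric.filterlim_pnhds_tendsto[OF _ x filterlim_ident])
  then have upper_lim: "((\<lambda>y. C * cube_dist N x y) \<longlongrightarrow> 0) (pnhds (unit_cube N) (cube_dist N) x)"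
    by (rule tendsto_mult_right_zero)
  have lower: "eventually (\<lambda>y. 0 \<le> profile_dist (mix x) (mix y)) (pnhds (unit_cube N) (cube_dist N) x)"
    using in_cube by (rule eventually_mono) (intro profiles.nonneg mix_Prof x)
  have upper: "eventually (\<lambda>y. profile_dist (mix x) (mix y) \<le> C * cube_dist N x y)
      (pnhds (unit_cube N) (cube_dist N) x)"
    using in_cube by (rule eventually_mono) (unfold C_def, rule profile_dist_mix_le[OF x])
  show "((\<lambda>y. profile_dist (mix x) (mix y)) \<longlongrightarrow> 0) (pnhds (unit_cube N) (cube_dist N) x)"
    by (rule tendsto_sandwich[OF lower upper tendsto_const upper_lim])
qed

lemma mix_fixed_point: "\<exists>x\<in>unit_cube N. weights (mix x) = x"
proof (rule brouwer_unit_cube)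
  fix x assume x: "x \<in> unit_cube N"
  show "weights (mix x) \<in> unit_cube N"
    by (rule weights_unit_cube[OF mix_Prof[OF x]])
  show "filterlim (\<lambda>x. weights (mix x)) (pnhds (unit_cube N) (cube_dist N) (weights (mix x)))
      (pnhds (unit_cube N) (cube_dist N) x)"
    by (rule filterlim_compose[OF filterlim_weights[OF mix_Prof[OF x]] filterlim_mix[OF x]])
qed

(* At a fixed point the weights of the player of maximal gain sum to 1, so only strictly improving
   deviations of that player receive positive weight. *)
lemma improving_at_fixed_point:
  assumes x: "x \<in> unit_cube N" and fixed: "weights (mix x) = x"
    and k: "k \<in> {1..n}" and k_max: "max_gain (mix x) = player_gain k (mix x)"
    and l: "l < Suc N" and pos: "0 < mix_weight k x l"
  shows "\<phi> k (mix x) < \<phi> k ((mix x)(k := mix_ctrl k l))"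
proof -
  let ?p = "mix x"
  have max_pos: "0 < max_gain ?p"
    by (rule max_gain_pos[OF mix_Prof[OF x]])
  have x_eq: "x l = gain l ?p / max_gain ?p" if "l < N" for l
    using fun_cong[OF fixed, of l] that by (simp add: weights_def)
  have "share k x = player_gain k ?p / max_gain ?p"
    unfolding share_def player_gain_def sum_divide_distrib by (intro sum.cong) (simp_all add: x_eq)
  then have "share k x = 1"
    using k_max max_pos by simp
  with l pos have l': "l < N" "idx l = k" "0 < x l"
    by (auto simp: mix_weight_def split: if_splits)
  then have "0 < gain l ?p"
    using x_eq[OF l'(1)] max_pos by (simp add: zero_less_divide_iff)
  then show ?thesis
    using l' by (simp add: mix_ctrl_def gain_def)
qed

theorem no_deviation_cover: False
proof -
  obtain x where x: "x \<in> unit_cube N" and fixed: "weights (mix x) = x"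
    using mix_fixed_point by blast
  define p where "p = mix x"
  have p: "p \<in> Prof n U"
    unfolding p_def by (rule mix_Prof[OF x])
  obtain k where k: "k \<in> {1..n}" and k_max: "max_gain p = player_gain k p"
    using max_gain_attained by blast
  have "p k = comb (Suc N) (mix_weight k x) (mix_ctrl k)"
    using k by (simp add: p_def mix_def)
  also have "\<dots> \<in> {v \<in> U k. \<phi> k p < \<phi> k (p(k := v))}"
  proof (rule convex_ctrl_comb[OF payoff_qc[OF k p]])
    show "\<forall>l<Suc N. 0 \<le> mix_weight k x l"
      using mix_weight_nonneg[OF x] by blast
    show "(\<Sum>l<Suc N. mix_weight k x l) = 1"
      by (rule sum_mix_weight[OF x])
    show "\<forall>l<Suc N. 0 < mix_weight k x l \<longrightarrow> mix_ctrl k l \<in> {v \<in> U k. \<phi> k p < \<phi> k (p(k := v))}"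
      using mix_ctrl_mem[OF k] improving_at_fixed_point[OF x fixed k] k_max by (simp add: p_def)
  qed
  finally show False
    by simp
qed

end

context control_game
begin

lemma eventually_improvement:
  fixes \<phi> :: "nat \<Rightarrow> (nat \<Rightarrow> real \<Rightarrow> nat \<Rightarrow> real) \<Rightarrow> real"
  assumes cont: "\<And>i p. i \<in> {1..n} \<Longrightarrow> p \<in> Prof n U \<Longrightarrow> (\<phi> i \<longlongrightarrow> \<phi> i p) (near p)"
    and p: "p \<in> Prof n U" and i: "i \<in> {1..n}" and v: "v \<in> U i"
    and better: "\<phi> i p < \<phi> i (p(i := v))"
  shows "eventually (\<lambda>q. \<phi> i q < \<phi> i (q(i := v))) (near p)"
proof -
  have "((\<lambda>q. \<phi> i (q(i := v)) - \<phi> i q) \<longlongrightarrow> \<phi> i (p(i := v)) - \<phi> i p) (near p)"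
    by (intro tendsto_diff filterlim_compose[OF cont[OF i Prof_update[OF p i v]] filterlim_update[OF p i v]]
        cont[OF i p])
  then have "eventually (\<lambda>q. 0 < \<phi> i (q(i := v)) - \<phi> i q) (near p)"
    by (rule order_tendstoD(1)) (use better in simp)
  then show ?thesis
    by (rule eventually_mono) simp
qed

lemma no_finite_deviation_cover:
  fixes \<phi> :: "nat \<Rightarrow> (nat \<Rightarrow> real \<Rightarrow> nat \<Rightarrow> real) \<Rightarrow> real"
  assumes cont: "\<And>i p. i \<in> {1..n} \<Longrightarrow> p \<in> Prof n U \<Longrightarrow> (\<phi> i \<longlongrightarrow> \<phi> i p) (near p)"
    and qc: "\<And>i p c. i \<in> {1..n} \<Longrightarrow> p \<in> Prof n U \<Longrightarrow> convex_ctrl {v \<in> U i. c < \<phi> i (p(i := v))}"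
    and F: "finite F" "F \<subseteq> {(i, v). i \<in> {1..n} \<and> v \<in> U i}"
    and covers: "\<And>p. p \<in> Prof n U \<Longrightarrow> \<exists>(i, v)\<in>F. \<phi> i p < \<phi> i (p(i := v))"
  shows False
proof -
  obtain h where h: "bij_betw h {0..<card F} F"
    using ex_bij_betw_nat_finite[OF F(1)] by blast
  interpret deviation_cover n t0 t1 m M U \<phi> "card F" "\<lambda>l. fst (h l)" "\<lambda>l. snd (h l)"
  proof
    show "fst (h l) \<in> {1..n} \<and> snd (h l) \<in> U (fst (h l))" if "l < card F" for l
      using bij_betw_apply[OF h] that F(2) by fastforce
    show "\<exists>l<card F. \<phi> (fst (h l)) p < \<phi> (fst (h l)) (p(fst (h l) := snd (h l)))"
      if p: "p \<in> Prof n U" for p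
    proof -
      obtain a where "a \<in> F" and "\<phi> (fst a) p < \<phi> (fst a) (p(fst a := snd a))"
        using covers[OF p] by auto
      moreover obtain l where "l < card F" "h l = a"
        using bij_betw_imp_surj_on[OF h] \<open>a \<in> F\<close> by force
      ultimately show ?thesis
        by blast
    qed
  qed (fact cont qc)+
  show False
    by (rule no_deviation_cover)
qed

theorem nash_equilibrium:
  fixes \<phi> :: "nat \<Rightarrow> (nat \<Rightarrow> real \<Rightarrow> nat \<Rightarrow> real) \<Rightarrow> real"
  assumes cont: "\<And>i p. i \<in> {1..n} \<Longrightarrow> p \<in> Prof n U \<Longrightarrow> (\<phi> i \<longlongrightarrow> \<phi> i p) (near p)"
    and qc: "\<And>i p c. i \<in> {1..n} \<Longrightarrow> p \<in> Prof n U \<Longrightarrow> convex_ctrl {v \<in> U i. c < \<phi> i (p(i := v))}"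
  shows "\<exists>p\<in>Prof n U. \<forall>i\<in>{1..n}. \<forall>v\<in>U i. \<phi> i (p(i := v)) \<le> \<phi> i p"
proof (rule ccontr)
  assume no_equilibrium: "\<not> ?thesis"
  define D where "D = {(i, v). i \<in> {1..n} \<and> v \<in> U i}"
  define W where "W = (\<lambda>(i, v). {q. \<phi> i q < \<phi> i (q(i := v))})"
  have "\<exists>a\<in>D. eventually (\<lambda>q. q \<in> W a) (near p)" if p: "p \<in> Prof n U" for p
  proof -
    have "\<not> (\<forall>i\<in>{1..n}. \<forall>v\<in>U i. \<phi> i (p(i := v)) \<le> \<phi> i p)"
      using no_equilibrium p by blast
    then have "\<exists>i\<in>{1..n}. \<exists>v\<in>U i. \<phi> i p < \<phi> i (p(i := v))"
      by (simp add: not_le)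
    then obtain i v where "i \<in> {1..n}" "v \<in> U i" "\<phi> i p < \<phi> i (p(i := v))"
      by blast
    then show ?thesis
      using eventually_improvement[OF cont p] by (intro bexI[of _ "(i, v)"]) (simp_all add: D_def W_def)
  qed
  then have "\<exists>F\<subseteq>D. finite F \<and> Prof n U \<subseteq> (\<Union>a\<in>F. W a)"
    by (rule profiles.finite_subcover)
  then obtain F where "F \<subseteq> D" and "finite F" and F_cover: "Prof n U \<subseteq> (\<Union>a\<in>F. W a)"
    by blast
  show False
  proof (rule no_finite_deviation_cover[OF cont qc \<open>finite F\<close>])
    show "F \<subseteq> {(i, v). i \<in> {1..n} \<and> v \<in> U i}"
      using \<open>F \<subseteq> D\<close> by (simp add: D_def)
    fix p assume "p \<in> Prof n U"
    then obtain a where "a \<in> F" "p \<in> W a"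
      using F_cover by blast
    then show "\<exists>(i, v)\<in>F. \<phi> i p < \<phi> i (p(i := v))"
      by (cases a) (auto simp: W_def)
  qed
qed

end

section \<open>Interval-valued payoffs\<close>

lemma iprec_imp_fst_less: "iprec B A \<Longrightarrow> fst B < fst A"
  by (simp add: iprec_def int_pos_def gH_diff_def)

lemma convex_ctrl_fst_superlevel:
  assumes qc: "gqc K F" and K: "convex_ctrl K"
  shows "convex_ctrl {v \<in> K. c < fst (F v)}"
  unfolding convex_ctrl_def
proof (intro ballI)
  fix x1 x2 l assume x1: "x1 \<in> {v \<in> K. c < fst (F v)}" and x2: "x2 \<in> {v \<in> K. c < fst (F v)}"
    and l: "l \<in> {0..1::real}"
  let ?x = "cmb l x1 x2"
  have "?x \<in> K"
    using K x1 x2 l unfolding convex_ctrl_def by blast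
  moreover have "c < fst (F ?x)"
  proof (rule ccontr)
    assume "\<not> c < fst (F ?x)"
    define a where "a = (c + min (fst (F x1)) (fst (F x2))) / 2"
    define b where "b = max (max (snd (F x1)) (snd (F x2))) (max (snd (F ?x)) a) + 1"
    have "valid_ival (a, b)"
      by (simp add: valid_ival_def b_def)
    moreover have "\<not> int_pos (gH_diff (a, b) (F x1))" "\<not> int_pos (gH_diff (a, b) (F x2))"
      using x1 x2 by (auto simp: int_pos_def gH_diff_def a_def)
    moreover have "0 < fst (gH_diff (a, b) (F ?x))"
      using x1 x2 \<open>\<not> c < fst (F ?x)\<close> by (auto simp: gH_diff_def a_def b_def)
    then have "int_pos (gH_diff (a, b) (F ?x))"
      by (simp add: int_pos_def valid_ival_def gH_diff_def)
    ultimately show False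
      using qc x1 x2 l unfolding gqc_def by blast
  qed
  ultimately show "?x \<in> {v \<in> K. c < fst (F v)}"
    by simp
qed

lemma (in control_game) tendsto_fst_icont:
  assumes cont: "icont_prof n t0 t1 m U G" and p: "p \<in> Prof n U"
  shows "((\<lambda>q. fst (G q)) \<longlongrightarrow> fst (G p)) (near p)"
  unfolding tendsto_pnhds
proof (intro allI impI)
  fix e :: real assume "e > 0"
  then obtain \<delta> where "\<delta> > 0" and \<delta>: "\<forall>q\<in>Prof n U. (\<forall>k\<in>{1..n}. supdist t0 t1 (m k) (q k) (p k) < \<delta>)
      \<longrightarrow> (let D = gH_diff (G q) (G p) in -e < fst D \<and> snd D < e)"
    using cont p unfolding icont_prof_def by blast
  have "dist (fst (G q)) (fst (G p)) < e" if q: "q \<in> Prof n U" and "profile_dist p q < \<delta>" for q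
  proof -
    have "supdist t0 t1 (m k) (q k) (p k) < \<delta>" if "k \<in> {1..n}" for k
      using supdist_le_profile_dist[OF q p that] \<open>profile_dist p q < \<delta>\<close> profiles.sym[OF p q] by simp
    then have "-e < fst (gH_diff (G q) (G p)) \<and> snd (gH_diff (G q) (G p)) < e"
      using \<delta> q unfolding Let_def by blast
    then show ?thesis
      by (auto simp: gH_diff_def dist_real_def)
  qed
  with \<open>\<delta> > 0\<close> show "\<exists>\<delta>>0. \<forall>q\<in>Prof n U. profile_dist p q < \<delta> \<longrightarrow> dist (fst (G q)) (fst (G p)) < e"
    by blast
qed

theorem theorem3p3:
  fixes n :: nat and t0 t1 :: real and x0 :: "'x::euclidean_space"
    and m :: "nat \<Rightarrow> nat" and M :: "nat \<Rightarrow> real"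
    and U :: "nat \<Rightarrow> (real \<Rightarrow> nat \<Rightarrow> real) set"
    and f :: "real \<Rightarrow> 'x \<Rightarrow> (nat \<Rightarrow> nat \<Rightarrow> real) \<Rightarrow> 'x"
    and d :: "nat \<Rightarrow> nat"
    and \<psi> :: "nat \<Rightarrow> 'x \<Rightarrow> nat \<Rightarrow> real \<times> real"
    and L :: "nat \<Rightarrow> real \<Rightarrow> 'x \<Rightarrow> (nat \<Rightarrow> nat \<Rightarrow> real) \<Rightarrow> nat \<Rightarrow> real \<times> real"
    and \<omega> :: "nat \<Rightarrow> nat \<Rightarrow> real"
  assumes n: "1 \<le> n"
    and t: "0 \<le> t0" "t0 < t1"
    and U: "\<forall>k\<in>{1..n}. admissible t0 t1 (m k) (M k) (U k) \<and> convex_ctrl (U k)"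
    and f: "f \<in> Yclass n t0 t1 m M"
    and \<psi>_ival: "\<forall>i\<in>{1..n}. \<forall>x. \<forall>k\<in>{1..d i}. valid_ival (\<psi> i x k)"
    and L_ival: "\<forall>i\<in>{1..n}. \<forall>s x w. \<forall>k\<in>{1..d i}. valid_ival (L i s x w k)"
    and L_int: "\<forall>i\<in>{1..n}. \<forall>us\<in>Prof n U. \<forall>k\<in>{1..d i}.
        (\<lambda>s. fst (L i s (state f t0 t1 x0 us s) (\<lambda>j. us j s) k)) integrable_on {t0..t1} \<and>
        (\<lambda>s. snd (L i s (state f t0 t1 x0 us s) (\<lambda>j. us j s) k)) integrable_on {t0..t1}"
    and \<omega>: "\<forall>i\<in>{1..n}. \<forall>k\<in>{1..d i}. 0 < \<omega> i k"
    and cont: "\<forall>i\<in>{1..n}. icont_prof n t0 t1 m U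
        (\<lambda>us. wsum (\<omega> i) (d i) (payoff \<psi> L f t0 t1 x0 i us))"
    and qc: "\<forall>i\<in>{1..n}. \<forall>us\<in>Prof n U.
        gqc (U i) (\<lambda>u. wsum (\<omega> i) (d i) (payoff \<psi> L f t0 t1 x0 i (us(i := u))))"
  shows "\<exists>us\<in>Prof n U. \<forall>i\<in>{1..n}. \<forall>u\<in>U i.
           \<not> iprec (wsum (\<omega> i) (d i) (payoff \<psi> L f t0 t1 x0 i us))
                   (wsum (\<omega> i) (d i) (payoff \<psi> L f t0 t1 x0 i (us(i := u))))"
proof -
  \<comment> \<open>The state equation and the form of the payoffs enter only through \<open>cont\<close> and \<open>qc\<close>.\<close>
  interpret control_game n t0 t1 m M U
    using n t U by unfold_locales auto
  let ?G = "\<lambda>i us. wsum (\<omega> i) (d i) (payoff \<psi> L f t0 t1 x0 i us)"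
  have "\<exists>p\<in>Prof n U. \<forall>i\<in>{1..n}. \<forall>v\<in>U i. fst (?G i (p(i := v))) \<le> fst (?G i p)"
  proof (rule nash_equilibrium)
    show "((\<lambda>q. fst (?G i q)) \<longlongrightarrow> fst (?G i p)) (near p)" if "i \<in> {1..n}" "p \<in> Prof n U" for i p
      using cont that by (intro tendsto_fst_icont) auto
    show "convex_ctrl {v \<in> U i. c < fst (?G i (p(i := v)))}" if "i \<in> {1..n}" "p \<in> Prof n U" for i p c
      using qc convex that by (intro convex_ctrl_fst_superlevel) auto
  qed
  then show ?thesis
    using iprec_imp_fst_less by (meson not_le)
qed

end
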